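(* For every $n$ and $w$ there exists an $(n,w)$-approximate swapper circuit with $O(n)$ generalized boolean gates, $O(n)$ $w$-selector gates, and depth $O(1)$.
   Context: An operational circuit consists of generalized boolean gates (constant fan-in, constant fan-out, arbitrary truth table) and $w$-selector gates (take a flag bit and two $w$-bit strings and output one string chosen by the flag). An $(n,w)$-approximate swapper receives an array $\mathbf I$ of $n$ elements, each with a $w$-bit payload and a label in $\{\mathtt{blue},\mathtt{red},\bot\}$ (elements labeled blue or red are colored); let $n_{\rm red},n_{\rm blue}$ be the numbers of red and blue elements. It must output a legal swap $\mathbf O$ of $\mathbf I$ in which at most $n/128+|n_{\rm red}-n_{\rm blue}|$ elements remain colored. $\mathbf O$ is a legal swap of $\mathbf I$ if there are pairwise distinct indices $i_1,j_1,\dots,i_\ell,j_\ell$ such that for each $t$, $\mathbf I[i_t]$ and $\mathbf I[j_t]$ are colored with opposite colors, and $\mathbf O$ is obtained from $\mathbf I$ by swapping $\mathbf I[i_t]$ with $\mathbf I[j_t]$ for all $t$, all swapped elements becoming uncolored (label $\bot$). *)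

theory Defs
  imports Main "HOL.Real"
begin

datatype label = Blue | Red | Bot

type_synonym elem = "label \<times> bool list"   \<comment> \<open>(label, w-bit payload)\<close>

definition colored :: "elem \<Rightarrow> bool" where
  "colored e \<longleftrightarrow> fst e \<noteq> Bot"

definition opposite :: "label \<Rightarrow> label \<Rightarrow> bool" where
  "opposite a b \<longleftrightarrow> (a = Blue \<and> b = Red) \<or> (a = Red \<and> b = Blue)"

definition legal_swap :: "elem list \<Rightarrow> elem list \<Rightarrow> bool" where
  "legal_swap I Out \<longleftrightarrow> length Out = length I \<and>
     (\<exists>P :: (nat \<times> nat) list.
        distinct (concat (map (\<lambda>(i,j). [i,j]) P)) \<and>
        (\<forall>(i,j)\<in>set P. i < length I \<and> j < length I \<and> opposite (fst (I!i)) (fst (I!j)) \<and>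
             Out!i = (Bot, snd (I!j)) \<and> Out!j = (Bot, snd (I!i))) \<and>
        (\<forall>k<length I. k \<notin> fst ` set P \<and> k \<notin> snd ` set P \<longrightarrow> Out!k = I!k))"

definition num_label :: "label \<Rightarrow> elem list \<Rightarrow> nat" where
  "num_label l A = card {i. i < length A \<and> fst (A!i) = l}"

definition num_colored :: "elem list \<Rightarrow> nat" where
  "num_colored A = card {i. i < length A \<and> colored (A!i)}"

definition approx_swap_ok :: "elem list \<Rightarrow> elem list \<Rightarrow> bool" where
  "approx_swap_ok I Out \<longleftrightarrow> legal_swap I Out \<and>
     real (num_colored Out) \<le> real (length I) / 128
        + \<bar>real (num_label Red I) - real (num_label Blue I)\<bar>"

text \<open>A circuit is a straight-line
  program: the wires 0..3n-1 are the inputs (for element i: wire 3i = "is colored" bit,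
  wire 3i+1 = "is red" bit, wire 3i+2 = w-bit payload), and the k-th gate produces wire
  3n+k.\<close>

datatype val = VB bool | VW "bool list"

datatype gate = BoolG "nat list" "bool list \<Rightarrow> bool" | SelG nat nat nat

datatype kind = KBit | KWord

fun getb :: "val \<Rightarrow> bool" where
  "getb (VB b) = b" | "getb (VW _) = False"

fun getw :: "val \<Rightarrow> bool list" where
  "getw (VW s) = s" | "getw (VB _) = []"

fun gate_ins :: "gate \<Rightarrow> nat list" where
  "gate_ins (BoolG ins f) = ins" | "gate_ins (SelG a x y) = [a, x, y]"

fun gate_kind :: "gate \<Rightarrow> kind" where
  "gate_kind (BoolG _ _) = KBit" | "gate_kind (SelG _ _ _) = KWord"

fun is_bool_gate :: "gate \<Rightarrow> bool" where
  "is_bool_gate (BoolG _ _) = True" | "is_bool_gate (SelG _ _ _) = False"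

fun eval_gate :: "val list \<Rightarrow> gate \<Rightarrow> val" where
  "eval_gate vs (BoolG ins f) = VB (f (map (\<lambda>i. getb (vs!i)) ins))"
| "eval_gate vs (SelG a x y) = (if getb (vs!a) then vs!y else vs!x)"

text \<open>A circuit on n elements: list of gates and, for each output element, the triple
  of wires (colored bit, red bit, payload string).\<close>
record circuit =
  gates :: "gate list"
  outs :: "(nat \<times> nat \<times> nat) list"

definition input_kinds :: "nat \<Rightarrow> kind list" where
  "input_kinds n = concat (replicate n [KBit, KBit, KWord])"

definition wire_kinds :: "nat \<Rightarrow> circuit \<Rightarrow> kind list" where
  "wire_kinds n C = input_kinds n @ map gate_kind (gates C)"

fun gate_typed :: "kind list \<Rightarrow> gate \<Rightarrow> bool" where
  "gate_typed ks (BoolG ins f) \<longleftrightarrow> (\<forall>i\<in>set ins. i < length ks \<and> ks!i = KBit)"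
| "gate_typed ks (SelG a x y) \<longleftrightarrow> a < length ks \<and> x < length ks \<and> y < length ks \<and>
      ks!a = KBit \<and> ks!x = KWord \<and> ks!y = KWord"

definition wf_circuit :: "nat \<Rightarrow> circuit \<Rightarrow> bool" where
  "wf_circuit n C \<longleftrightarrow>
     (\<forall>k<length (gates C). gate_typed (take (3*n + k) (wire_kinds n C)) (gates C ! k)) \<and>
     length (outs C) = n \<and>
     (\<forall>(a,b,p)\<in>set (outs C). a < length (wire_kinds n C) \<and> b < length (wire_kinds n C) \<and>
        p < length (wire_kinds n C) \<and> wire_kinds n C ! a = KBit \<and>
        wire_kinds n C ! b = KBit \<and> wire_kinds n C ! p = KWord)"

definition encode_elem :: "elem \<Rightarrow> val list" where
  "encode_elem e = [VB (fst e \<noteq> Bot), VB (fst e = Red), VW (snd e)]"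

definition decode_label :: "bool \<Rightarrow> bool \<Rightarrow> label" where
  "decode_label c r = (if \<not> c then Bot else if r then Red else Blue)"

definition eval_wires :: "circuit \<Rightarrow> elem list \<Rightarrow> val list" where
  "eval_wires C I = fold (\<lambda>g vs. vs @ [eval_gate vs g]) (gates C) (concat (map encode_elem I))"

definition run_circuit :: "circuit \<Rightarrow> elem list \<Rightarrow> elem list" where
  "run_circuit C I = (let vs = eval_wires C I in
     map (\<lambda>(a,b,p). (decode_label (getb (vs!a)) (getb (vs!b)), getw (vs!p))) (outs C))"

definition num_bool_gates :: "circuit \<Rightarrow> nat" where
  "num_bool_gates C = length (filter is_bool_gate (gates C))"

definition num_sel_gates :: "circuit \<Rightarrow> nat" where
  "num_sel_gates C = length (filter (\<lambda>g. \<not> is_bool_gate g) (gates C))"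

definition max_fan_in :: "circuit \<Rightarrow> nat" where
  "max_fan_in C = Max (insert 0 (set (map (\<lambda>g. length (gate_ins g)) (gates C))))"

definition fan_out :: "circuit \<Rightarrow> nat \<Rightarrow> nat" where
  "fan_out C v = length (filter (\<lambda>u. u = v) (concat (map gate_ins (gates C))))
     + length (filter (\<lambda>u. u = v) (concat (map (\<lambda>(a,b,p). [a,b,p]) (outs C))))"

definition max_bool_fan_out :: "nat \<Rightarrow> circuit \<Rightarrow> nat" where
  "max_bool_fan_out n C = Max (insert 0
     {fan_out C (3*n + k) | k. k < length (gates C) \<and> is_bool_gate (gates C ! k)})"

definition wire_depths :: "nat \<Rightarrow> circuit \<Rightarrow> nat list" where
  "wire_depths n C = fold (\<lambda>g ds. ds @ [1 + Max (insert 0 (set (map (\<lambda>i. ds!i) (gate_ins g))))])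
      (gates C) (replicate (3*n) 0)"

definition depth :: "nat \<Rightarrow> circuit \<Rightarrow> nat" where
  "depth n C = Max (insert 0 (set (wire_depths n C)))"

definition is_approx_swapper :: "nat \<Rightarrow> nat \<Rightarrow> circuit \<Rightarrow> bool" where
  "is_approx_swapper n w C \<longleftrightarrow> wf_circuit n C \<and>
     (\<forall>I :: elem list. length I = n \<and> (\<forall>e\<in>set I. length (snd e) = w) \<longrightarrow>
        approx_swap_ok I (run_circuit C I))"

end

theory Submission
  imports Defs "HOL-Library.FuncSet" Complex_Main
begin

text \<open>Fix a graph on the \<open>n\<close> positions with bounded degree \<open>D\<close> and reversible edges in which
  any two disjoint sets of more than \<open>n/512\<close> vertices are joined by an edge. For large \<open>n\<close> a
  random function \<open>[d] \<times> [n] \<rightarrow> [n]\<close> has this property for sets of size about \<open>n/1024\<close> by a union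
  bound; adding reverse edges and deleting the few vertices of large in-degree keeps it and
  bounds the degree. For small \<open>n\<close> the complete graph will do.

  On this graph run \<open>9D\<close> rounds of local matching: every red element proposes to its first blue
  neighbour, every blue element accepts its first proposer, and accepted pairs swap payloads and
  become uncoloured. While both colours occupy more than \<open>n/512\<close> positions, expansion leaves at
  most \<open>n/512\<close> red elements without a blue neighbour, and every other red element is a neighbour of
  a matched blue one. Hence \<open>min(#red, #blue) - n/512\<close> shrinks by the factor \<open>1 - 1/D\<close> in each
  round and ends below \<open>n/512\<close>, so at most \<open>n/128 + |#red - #blue|\<close> elements stay coloured.

  A round looks only at radius-3 neighbourhoods, so after \<open>t\<close> rounds the state of a vertex is a
  function of the input labels in its ball of radius \<open>3t\<close>, which has constant size. Each swap
  decision is therefore a single generalized boolean gate on the input label bits, and each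
  payload moves along a chain of \<open>D\<close> selector gates per round: \<open>O(n)\<close> gates and depth \<open>O(D^2)\<close>.\<close>

section \<open>Expanders with reversible edges\<close>

definition avoiding :: "nat \<Rightarrow> nat \<Rightarrow> nat set \<Rightarrow> nat set \<Rightarrow> (nat \<times> nat \<Rightarrow> nat) set" where
  "avoiding n d A B = PiE ({..<d} \<times> {..<n}) (\<lambda>(k,a). if a \<in> A then {..<n} - B else {..<n})"

lemma card_avoiding:
  assumes "A \<subseteq> {..<n}" "B \<subseteq> {..<n}" "card A = m" "card B = m"
  shows "card (avoiding n d A B) = (n-m)^(d*m) * n^(d*(n-m))"
proof -
  have fin: "finite ({..<d}\<times>{..<n})" by simp
  have "card (avoiding n d A B) = (\<Prod>x\<in>{..<d}\<times>{..<n}. card (if snd x \<in> A then {..<n} - B else {..<n}))"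
    unfolding avoiding_def by (subst card_PiE[OF fin]) (auto intro!: prod.cong simp: case_prod_beta)
  also have "\<dots> = (\<Prod>x\<in>{..<d}\<times>{..<n}. (if snd x \<in> A then n - m else n))"
    using assms by (intro prod.cong) (auto simp: card_Diff_subset finite_subset)
  also have "\<dots> = (n-m)^card ({..<d}\<times>{..<n} \<inter> {x. snd x \<in> A}) * n ^ card ({..<d}\<times>{..<n} \<inter> - {x. snd x \<in> A})"
    by (subst prod.If_cases) auto
  also have "{..<d}\<times>{..<n} \<inter> {x. snd x \<in> A} = {..<d} \<times> A" using assms by auto
  also have "{..<d}\<times>{..<n} \<inter> - {x. snd x \<in> A} = {..<d} \<times> ({..<n} - A)" by auto
  finally show ?thesis using assms by (simp add: card_cartesian_product card_Diff_subset finite_subset)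
qed

lemma finite_avoiding: "finite (avoiding n d A B)"
  unfolding avoiding_def by (auto intro!: finite_PiE split: prod.splits)

lemma hits_if_not_avoiding:
  assumes "g \<in> PiE ({..<d} \<times> {..<n}) (\<lambda>_. {..<n})" "g \<notin> avoiding n d A B"
  shows "\<exists>k<d. \<exists>a\<in>A. g (k,a) \<in> B"
proof -
  have "g \<in> extensional ({..<d} \<times> {..<n})" using assms(1) by (simp add: PiE_def)
  then obtain x where x: "x \<in> {..<d} \<times> {..<n}" "g x \<notin> (if snd x \<in> A then {..<n} - B else {..<n})"
    using assms(2) by (auto simp: avoiding_def PiE_def Pi_def case_prod_beta)
  have "g x \<in> {..<n}" using assms(1) x(1) by auto
  with x show ?thesis by (cases x) (auto split: if_splits)
qed

lemma card_subsets_le: "card {A. A \<subseteq> {..<n} \<and> card A = m} \<le> 2^n"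
proof -
  have "card {A. A \<subseteq> {..<n} \<and> card A = m} \<le> card (Pow {..<n})" by (intro card_mono) auto
  thus ?thesis by (simp add: card_Pow)
qed

lemma counting_inequality:
  fixes n m d :: nat
  assumes n: "n \<ge> 2048" and m: "m = n div 1024 + 1" and d: "d = 4*1024^2"
  shows "4^n * (n-m)^(d*m) < n^(d*m)"
proof -
  \<comment> \<open>with \<open>x = m/n\<close>: \<open>(1 - x)^(dm) \<le> exp (-x d m) \<le> exp (-4n) < 4^(-n)\<close>\<close>
  have m1: "1024 * m \<ge> n" using m by linarith
  have mn: "m < n" using m n by linarith
  define x where "x = real m / real n"
  have npos: "real n > 0" using n by simp
  have x0: "0 \<le> x" "x \<le> 1" using mn npos by (auto simp: x_def)
  have "real (n - m) = real n * (1 - x)" using mn npos by (simp add: x_def of_nat_diff field_simps)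
  hence "real ((n-m)^(d*m)) = real n ^(d*m) * (1-x)^(d*m)" by (simp add: power_mult_distrib)
  also have "(1-x)^(d*m) \<le> exp (-x) ^ (d*m)"
    using x0 by (intro power_mono) (auto simp: exp_ge_add_one_self[of "-x", simplified])
  also have "exp (-x) ^ (d*m) = exp (- (x * real (d*m)))" by (simp add: exp_of_nat_mult[symmetric] mult.commute)
  also have "x * real (d*m) \<ge> 4 * real n"
  proof -
    have "4 * real n = real d * (real n / 1024) / 1024" using d by simp
    also have "\<dots> \<le> real d * real m / 1024"
      using m1 by (intro divide_right_mono mult_left_mono) auto
    also have "real d * real m / 1024 = real d * real m * (real n / 1024) / real n" using npos by simp
    also have "\<dots> \<le> real d * real m * real m / real n"
      using m1 npos by (intro divide_right_mono mult_left_mono) auto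
    also have "\<dots> = x * real (d*m)" by (simp add: x_def)
    finally show ?thesis .
  qed
  hence "exp (- (x * real (d*m))) \<le> exp (- (4 * real n))" by simp
  finally have A: "real ((n-m)^(d*m)) \<le> real n ^(d*m) * exp (- (4 * real n))"
    by (simp add: mult_left_mono)
  have e4: "exp (4::real) \<ge> 5" using exp_ge_add_one_self[of "4::real"] by simp
  have "exp (4 * real n) = exp 4 ^ n" by (simp add: exp_of_nat_mult[symmetric] mult.commute)
  also have "exp (4::real) ^ n > 4 ^ n" using e4 n by (intro power_strict_mono) auto
  finally have B: "4^n * exp (- (4 * real n)) < 1" by (simp add: exp_minus field_simps)
  have "real (4^n * (n-m)^(d*m)) = 4^n * real ((n-m)^(d*m))" by simp
  also have "\<dots> \<le> 4^n * (real n ^(d*m) * exp (- (4 * real n)))" using A by simp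
  also have "\<dots> = real n ^ (d*m) * (4^n * exp (- (4 * real n)))" by simp
  also have "\<dots> < real n ^ (d*m)" using B npos by simp
  finally have "real (4^n * (n-m)^(d*m)) < real (n ^ (d*m))" by simp
  thus ?thesis by (simp only: of_nat_less_iff)
qed

lemma card_Union_avoiding_less:
  fixes n m d :: nat
  assumes n: "n \<ge> 2048" and m: "m = n div 1024 + 1" and d: "d = 4*1024^2"
  defines "S \<equiv> {A. A \<subseteq> {..<n} \<and> card A = m}"
  shows "card (\<Union>p\<in>S \<times> S. avoiding n d (fst p) (snd p)) < n^(d*n)"
proof -
  have finS: "finite S" by (rule finite_subset[of _ "Pow {..<n}"]) (auto simp: S_def)
  have "card (\<Union>p\<in>S \<times> S. avoiding n d (fst p) (snd p)) \<le> (\<Sum>p\<in>S \<times> S. card (avoiding n d (fst p) (snd p)))"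
    by (rule card_UN_le) (simp add: finS)
  also have "\<dots> = (\<Sum>p\<in>S \<times> S. (n-m)^(d*m) * n^(d*(n-m)))"
    by (intro sum.cong refl card_avoiding) (auto simp: S_def)
  also have "\<dots> = card (S \<times> S) * ((n-m)^(d*m) * n^(d*(n-m)))" by simp
  also have "\<dots> \<le> 4^n * ((n-m)^(d*m) * n^(d*(n-m)))"
  proof -
    have "card (S \<times> S) \<le> 2^n * 2^n"
      using card_subsets_le[of n m] by (simp add: S_def card_cartesian_product mult_le_mono)
    also have "(2::nat)^n * 2^n = 4^n" by (simp add: power_mult_distrib[symmetric])
    finally show ?thesis by simp
  qed
  also have "\<dots> < n^(d*m) * n^(d*(n-m))"
    using counting_inequality[OF n m d] n by simp
  also have "\<dots> = n^(d*n)"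
  proof -
    have "m \<le> n" using m n by linarith
    hence "d*m + d*(n-m) = d*n" by (metis add_diff_inverse_nat diff_add_inverse2 distrib_left not_less)
    thus ?thesis by (metis power_add)
  qed
  finally show ?thesis .
qed

lemma exists_hitting_function:
  fixes n m d :: nat
  assumes n: "n \<ge> 2048" and m: "m = n div 1024 + 1" and d: "d = 4*1024^2"
  shows "\<exists>g \<in> PiE ({..<d}\<times>{..<n}) (\<lambda>_. {..<n}). \<forall>A B. A \<subseteq> {..<n} \<longrightarrow> B \<subseteq> {..<n} \<longrightarrow>
     card A = m \<longrightarrow> card B = m \<longrightarrow> (\<exists>k<d. \<exists>a\<in>A. g (k,a) \<in> B)"
proof -
  define S where "S = {A. A \<subseteq> {..<n} \<and> card A = m}"
  define U where "U = PiE ({..<d}\<times>{..<n}) (\<lambda>_. {..<n})"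
  have finS: "finite S" by (rule finite_subset[of _ "Pow {..<n}"]) (auto simp: S_def)
  have "card U = n^(d*n)" unfolding U_def by (simp add: card_PiE card_cartesian_product)
  hence "\<not> U \<subseteq> (\<Union>p\<in>S \<times> S. avoiding n d (fst p) (snd p))"
  proof (intro notI)
    assume "U \<subseteq> (\<Union>p\<in>S \<times> S. avoiding n d (fst p) (snd p))"
    hence "card U \<le> card (\<Union>p\<in>S \<times> S. avoiding n d (fst p) (snd p))"
      by (rule card_mono[rotated]) (simp add: finS finite_avoiding)
    moreover assume "card U = n^(d*n)"
    ultimately show False using card_Union_avoiding_less[OF n m d] by (simp add: S_def)
  qed
  then obtain g where g: "g \<in> U" and notin: "g \<notin> (\<Union>p\<in>S \<times> S. avoiding n d (fst p) (snd p))"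
    by blast
  show ?thesis
  proof (intro bexI[OF _ g[unfolded U_def]] allI impI)
    fix A B assume "A \<subseteq> {..<n}" "B \<subseteq> {..<n}" "card A = m" "card B = m"
    hence "(A, B) \<in> S \<times> S" by (simp add: S_def)
    hence "g \<notin> avoiding n d A B" using notin by fastforce
    thus "\<exists>k<d. \<exists>a\<in>A. g (k,a) \<in> B" by (rule hits_if_not_avoiding[OF g[unfolded U_def]])
  qed
qed

text \<open>\<open>N i k\<close> is the \<open>k\<close>-th neighbour of vertex \<open>i\<close>; neighbours may repeat and loops are allowed.\<close>
definition sym_expander :: "nat \<Rightarrow> nat \<Rightarrow> (nat \<Rightarrow> nat \<Rightarrow> nat) \<Rightarrow> bool" where
  "sym_expander n D N \<longleftrightarrow> (\<forall>i<n. \<forall>k<D. N i k < n) \<and> (\<forall>i<n. \<forall>k<D. \<exists>k'<D. N (N i k) k' = i) \<and>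
     (\<forall>A B. A \<subseteq> {..<n} \<longrightarrow> B \<subseteq> {..<n} \<longrightarrow> A \<inter> B = {} \<longrightarrow> n < 512 * card A \<longrightarrow> n < 512 * card B
        \<longrightarrow> (\<exists>a\<in>A. \<exists>k<D. N a k \<in> B))"

definition base_degree :: nat where "base_degree = 4*1024^2"
definition expander_degree :: nat where "expander_degree = base_degree + 2048 * base_degree"

lemma sym_expander_small:
  assumes "n \<le> D"
  shows "sym_expander n D (\<lambda>i k. k mod n)"
  unfolding sym_expander_def
proof (intro conjI allI impI)
  fix i k assume "i < n" "k < D" thus "k mod n < n" by simp
next
  fix i k assume "i < n" "k < D" thus "\<exists>k'<D. (k' mod n) = i"
    using assms by (intro exI[of _ i]) auto
next
  fix A B assume h: "A \<subseteq> {..<n}" "B \<subseteq> {..<n}" "A \<inter> B = {}" "n < 512 * card A" "n < 512 * card B"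
  from h(4) have "A \<noteq> {}" by auto
  then obtain a where a: "a \<in> A" by auto
  from h(5) have "B \<noteq> {}" by auto
  then obtain b where b: "b \<in> B" by auto
  have "b < n" using b h(2) by auto
  thus "\<exists>a\<in>A. \<exists>k<D. k mod n \<in> B" using a b assms by (intro bexI[of _ a] exI[of _ b]) auto
qed

context
  fixes n d :: nat and g :: "nat \<times> nat \<Rightarrow> nat"
  assumes g_range: "\<And>k i. k < d \<Longrightarrow> i < n \<Longrightarrow> g (k, i) < n"
begin

definition in_edges :: "nat \<Rightarrow> (nat \<times> nat) set" where
  "in_edges j = {p \<in> {..<d} \<times> {..<n}. g p = j}"

definition heavy :: "nat set" where
  "heavy = {j. j < n \<and> 2048 * d < card (in_edges j)}"

definition in_list :: "nat \<Rightarrow> (nat \<times> nat) list" where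
  "in_list j = (SOME xs. set xs = in_edges j \<and> distinct xs)"

text \<open>Slots below \<open>d\<close> follow the out-edges of \<open>g\<close>, the remaining \<open>2048 d\<close> slots the in-edges;
  edges at heavy vertices are replaced by loops, which keeps the degree bounded and makes
  every edge reversible.\<close>
definition pruned_graph :: "nat \<Rightarrow> nat \<Rightarrow> nat" where
  "pruned_graph i k =
     (if k < d then (if i \<notin> heavy \<and> g (k, i) \<notin> heavy then g (k, i) else i)
      else (if i \<notin> heavy \<and> k - d < length (in_list i) \<and> snd (in_list i ! (k - d)) \<notin> heavy
            then snd (in_list i ! (k - d)) else i))"

lemma finite_in_edges: "finite (in_edges j)"
  by (simp add: in_edges_def)

lemma set_in_list: "set (in_list j) = in_edges j" and distinct_in_list: "distinct (in_list j)"
proof -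
  have "set (in_list j) = in_edges j \<and> distinct (in_list j)"
    unfolding in_list_def by (rule someI_ex) (rule finite_distinct_list[OF finite_in_edges])
  thus "set (in_list j) = in_edges j" "distinct (in_list j)" by auto
qed

lemma length_in_list: "length (in_list j) = card (in_edges j)"
  by (metis distinct_card distinct_in_list set_in_list)

lemma card_heavy:
  assumes "0 < d" shows "2048 * card heavy \<le> n"
proof -
  have "(\<Sum>j<n. card (in_edges j)) = card (\<Union>j<n. in_edges j)"
    by (rule card_UN_disjoint[symmetric]) (auto simp: finite_in_edges in_edges_def)
  also have "(\<Union>j<n. in_edges j) = {..<d} \<times> {..<n}" using g_range by (auto simp: in_edges_def)
  finally have total: "(\<Sum>j<n. card (in_edges j)) = d * n" by (simp add: card_cartesian_product)
  have "card heavy * (2048 * d) \<le> (\<Sum>j\<in>heavy. card (in_edges j))"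
    using sum_mono[of heavy "\<lambda>_. 2048 * d" "\<lambda>j. card (in_edges j)"] by (auto simp: heavy_def)
  also have "\<dots> \<le> (\<Sum>j<n. card (in_edges j))" by (rule sum_mono2) (auto simp: heavy_def)
  finally have "card heavy * 2048 * d \<le> n * d" using total by (simp add: mult.commute mult.left_commute)
  thus ?thesis using assms by simp
qed

lemma pruned_graph_range:
  assumes "i < n" shows "pruned_graph i k < n"
proof (cases "k < d")
  case True thus ?thesis using assms g_range by (auto simp: pruned_graph_def)
next
  case False
  have "snd (in_list i ! (k - d)) < n" if "k - d < length (in_list i)"
    using that nth_mem[OF that] by (auto simp: set_in_list in_edges_def)
  thus ?thesis using False assms by (auto simp: pruned_graph_def)
qed

lemma pruned_graph_reverse:
  assumes i: "i < n" and k: "k < d + 2048 * d"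
  shows "\<exists>k' < d + 2048 * d. pruned_graph (pruned_graph i k) k' = i"
proof (cases "pruned_graph i k = i")
  case True thus ?thesis using k by auto
next
  case moved: False
  show ?thesis
  proof (cases "k < d")
    case True
    with moved have h: "i \<notin> heavy" "g (k, i) \<notin> heavy" "pruned_graph i k = g (k, i)"
      by (auto simp: pruned_graph_def split: if_splits)
    have "(k, i) \<in> in_edges (g (k, i))" using True i by (auto simp: in_edges_def)
    then obtain l where l: "l < length (in_list (g (k, i)))" "in_list (g (k, i)) ! l = (k, i)"
      by (metis in_set_conv_nth set_in_list)
    have "card (in_edges (g (k, i))) \<le> 2048 * d" using h(2) g_range[OF True i] by (auto simp: heavy_def)
    hence "d + l < d + 2048 * d" using l(1) length_in_list by simp
    moreover have "pruned_graph (g (k, i)) (d + l) = i" using h l by (simp add: pruned_graph_def)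
    ultimately show ?thesis using h(3) by (auto intro!: exI[of _ "d + l"])
  next
    case False
    with moved have h: "i \<notin> heavy" "k - d < length (in_list i)" "snd (in_list i ! (k - d)) \<notin> heavy"
      "pruned_graph i k = snd (in_list i ! (k - d))" by (auto simp: pruned_graph_def split: if_splits)
    obtain k' i' where p: "in_list i ! (k - d) = (k', i')" by fastforce
    have "(k', i') \<in> in_edges i" using h(2) p set_in_list nth_mem by metis
    hence "k' < d" "g (k', i') = i" by (auto simp: in_edges_def)
    hence "pruned_graph i' k' = i" using h p by (simp add: pruned_graph_def)
    thus ?thesis using h(4) p \<open>k' < d\<close> by (intro exI[of _ k']) auto
  qed
qed

lemma pruned_graph_expands:
  assumes n: "2048 \<le> n" and d: "0 < d"
    and hit: "\<And>A B. A \<subseteq> {..<n} \<Longrightarrow> B \<subseteq> {..<n} \<Longrightarrow> card A = n div 1024 + 1 \<Longrightarrow>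
                card B = n div 1024 + 1 \<Longrightarrow> \<exists>k<d. \<exists>a\<in>A. g (k, a) \<in> B"
    and A: "A \<subseteq> {..<n}" "n < 512 * card A" and B: "B \<subseteq> {..<n}" "n < 512 * card B"
  shows "\<exists>a\<in>A. \<exists>k<d. pruned_graph a k \<in> B"
proof -
  have light: "n div 1024 + 1 \<le> card (X - heavy)" if "X \<subseteq> {..<n}" "n < 512 * card X" for X
  proof -
    have "finite heavy" by (rule finite_subset[of _ "{..<n}"]) (auto simp: heavy_def)
    hence "card X \<le> card ((X - heavy) \<union> heavy)" using that(1)
      by (intro card_mono) (auto intro: finite_subset)
    also have "\<dots> \<le> card (X - heavy) + card heavy" by (rule card_Un_le)
    finally show ?thesis using that(2) card_heavy[OF d] n by linarith
  qed
  obtain A' where A': "A' \<subseteq> A - heavy" "card A' = n div 1024 + 1"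
    using light[OF A] obtain_subset_with_card_n by metis
  obtain B' where B': "B' \<subseteq> B - heavy" "card B' = n div 1024 + 1"
    using light[OF B] obtain_subset_with_card_n by metis
  obtain k a where ka: "k < d" "a \<in> A'" "g (k, a) \<in> B'"
    using hit[of A' B'] A' B' A(1) B(1) by blast
  hence "pruned_graph a k \<in> B" using A' B' by (auto simp: pruned_graph_def)
  thus ?thesis using ka A' by blast
qed

end

lemma sym_expander_large:
  assumes n: "2048 \<le> n" shows "\<exists>N. sym_expander n expander_degree N"
proof -
  obtain g where g: "g \<in> PiE ({..<base_degree} \<times> {..<n}) (\<lambda>_. {..<n})" and
    hit: "\<And>A B. A \<subseteq> {..<n} \<Longrightarrow> B \<subseteq> {..<n} \<Longrightarrow> card A = n div 1024 + 1 \<Longrightarrow>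
            card B = n div 1024 + 1 \<Longrightarrow> \<exists>k<base_degree. \<exists>a\<in>A. g (k, a) \<in> B"
    using exists_hitting_function[OF n refl base_degree_def] by blast
  have g_range: "\<And>k i. k < base_degree \<Longrightarrow> i < n \<Longrightarrow> g (k, i) < n" using g by auto
  have d: "0 < base_degree" by (simp add: base_degree_def)
  have degree: "expander_degree = base_degree + 2048 * base_degree" by (simp add: expander_degree_def)
  have "sym_expander n expander_degree (pruned_graph n base_degree g)"
    unfolding sym_expander_def degree
  proof (intro conjI allI impI)
    fix i k assume "i < n" "k < base_degree + 2048 * base_degree"
    thus "pruned_graph n base_degree g i k < n"
      "\<exists>k'<base_degree + 2048 * base_degree. pruned_graph n base_degree g (pruned_graph n base_degree g i k) k' = i"
      using pruned_graph_range[where n=n and d=base_degree and g=g, OF g_range]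
        pruned_graph_reverse[where n=n and d=base_degree and g=g, OF g_range] by auto
  next
    fix A B assume "A \<subseteq> {..<n}" "B \<subseteq> {..<n}" "A \<inter> B = {}" "n < 512 * card A" "n < 512 * card B"
    then obtain a k where "a \<in> A" "k < base_degree" "pruned_graph n base_degree g a k \<in> B"
      using pruned_graph_expands[where n=n and d=base_degree and g=g, OF g_range n d hit] by blast
    thus "\<exists>a\<in>A. \<exists>k<base_degree + 2048 * base_degree. pruned_graph n base_degree g a k \<in> B" by force
  qed
  thus ?thesis by blast
qed

lemma sym_expander_exists: "\<exists>N. sym_expander n expander_degree N"
proof (cases "n \<ge> 2048")
  case True thus ?thesis by (rule sym_expander_large)
next
  case False
  hence "n \<le> expander_degree" by (simp add: expander_degree_def base_degree_def)
  thus ?thesis using sym_expander_small by blast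
qed

section \<open>Local matching rounds\<close>

context
  fixes N :: "nat \<Rightarrow> nat \<Rightarrow> nat" and D :: nat
begin

definition has_blue_nb :: "(nat \<Rightarrow> label) \<Rightarrow> nat \<Rightarrow> bool" where
  "has_blue_nb lab x \<longleftrightarrow> (\<exists>k<D. lab (N x k) = Blue)"

definition blue_choice :: "(nat \<Rightarrow> label) \<Rightarrow> nat \<Rightarrow> nat" where
  "blue_choice lab x = (LEAST k. k < D \<and> lab (N x k) = Blue)"

definition proposes :: "(nat \<Rightarrow> label) \<Rightarrow> nat \<Rightarrow> nat \<Rightarrow> bool" where
  "proposes lab x j \<longleftrightarrow> lab x = Red \<and> has_blue_nb lab x \<and> N x (blue_choice lab x) = j"

definition has_proposal :: "(nat \<Rightarrow> label) \<Rightarrow> nat \<Rightarrow> bool" where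
  "has_proposal lab j \<longleftrightarrow> (\<exists>k<D. proposes lab (N j k) j)"

definition accepted_slot :: "(nat \<Rightarrow> label) \<Rightarrow> nat \<Rightarrow> nat" where
  "accepted_slot lab j = (LEAST k. k < D \<and> proposes lab (N j k) j)"

definition blue_matched :: "(nat \<Rightarrow> label) \<Rightarrow> nat \<Rightarrow> bool" where
  "blue_matched lab j \<longleftrightarrow> lab j = Blue \<and> has_proposal lab j"

definition red_matched :: "(nat \<Rightarrow> label) \<Rightarrow> nat \<Rightarrow> bool" where
  "red_matched lab x \<longleftrightarrow> lab x = Red \<and> has_blue_nb lab x \<and> blue_matched lab (N x (blue_choice lab x)) \<and>
      N (N x (blue_choice lab x)) (accepted_slot lab (N x (blue_choice lab x))) = x"

definition matched :: "(nat \<Rightarrow> label) \<Rightarrow> nat \<Rightarrow> bool" where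
  "matched lab i \<longleftrightarrow> red_matched lab i \<or> blue_matched lab i"

definition match_slot :: "(nat \<Rightarrow> label) \<Rightarrow> nat \<Rightarrow> nat" where
  "match_slot lab i = (if red_matched lab i then blue_choice lab i else accepted_slot lab i)"

definition partner :: "(nat \<Rightarrow> label) \<Rightarrow> nat \<Rightarrow> nat" where
  "partner lab i = N i (match_slot lab i)"

definition round_label :: "(nat \<Rightarrow> label) \<Rightarrow> nat \<Rightarrow> label" where
  "round_label lab i = (if matched lab i then Bot else lab i)"

definition round_payload :: "(nat \<Rightarrow> label) \<Rightarrow> (nat \<Rightarrow> bool list) \<Rightarrow> nat \<Rightarrow> bool list" where
  "round_payload lab pay i = (if matched lab i then pay (partner lab i) else pay i)"

fun rounds_label :: "nat \<Rightarrow> (nat \<Rightarrow> label) \<Rightarrow> nat \<Rightarrow> label" where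
  "rounds_label 0 lab = lab"
| "rounds_label (Suc t) lab = round_label (rounds_label t lab)"

fun rounds_payload :: "nat \<Rightarrow> (nat \<Rightarrow> label) \<Rightarrow> (nat \<Rightarrow> bool list) \<Rightarrow> nat \<Rightarrow> bool list" where
  "rounds_payload 0 lab pay = pay"
| "rounds_payload (Suc t) lab pay = round_payload (rounds_label t lab) (rounds_payload t lab pay)"

lemma blue_choiceI: "has_blue_nb lab x \<Longrightarrow> blue_choice lab x < D \<and> lab (N x (blue_choice lab x)) = Blue"
  unfolding has_blue_nb_def blue_choice_def by (metis (mono_tags, lifting) LeastI)

lemma accepted_slotI: "has_proposal lab j \<Longrightarrow> accepted_slot lab j < D \<and> proposes lab (N j (accepted_slot lab j)) j"
  unfolding has_proposal_def accepted_slot_def by (metis (mono_tags, lifting) LeastI)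

lemma red_matched_Red: "red_matched lab x \<Longrightarrow> lab x = Red" by (simp add: red_matched_def)
lemma blue_matched_Blue: "blue_matched lab x \<Longrightarrow> lab x = Blue" by (simp add: blue_matched_def)
lemma not_red_and_blue_matched: "\<not> (red_matched lab x \<and> blue_matched lab x)" by (auto simp: red_matched_def blue_matched_def)

lemma blue_matched_partner: "blue_matched lab j \<Longrightarrow> red_matched lab (partner lab j) \<and> partner lab (partner lab j) = j"
proof -
  assume b: "blue_matched lab j"
  hence nr: "\<not> red_matched lab j" using not_red_and_blue_matched by blast
  have hp: "has_proposal lab j" using b by (simp add: blue_matched_def)
  define x where "x = N j (accepted_slot lab j)"
  have px: "partner lab j = x" using nr by (simp add: partner_def match_slot_def x_def)
  have pr: "proposes lab x j" using accepted_slotI[OF hp] by (simp add: x_def)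
  hence xr: "lab x = Red" "has_blue_nb lab x" "N x (blue_choice lab x) = j" by (auto simp: proposes_def)
  have rx: "red_matched lab x" using xr b by (simp add: red_matched_def x_def)
  thus ?thesis using px xr by (simp add: partner_def match_slot_def)
qed

lemma red_matched_partner: "red_matched lab x \<Longrightarrow> blue_matched lab (partner lab x) \<and> partner lab (partner lab x) = x"
proof -
  assume r: "red_matched lab x"
  hence px: "partner lab x = N x (blue_choice lab x)" by (simp add: partner_def match_slot_def)
  have b: "blue_matched lab (partner lab x)" using r px by (simp add: red_matched_def)
  hence "\<not> red_matched lab (partner lab x)" using not_red_and_blue_matched by blast
  hence "partner lab (partner lab x) = N (partner lab x) (accepted_slot lab (partner lab x))"
    by (simp add: partner_def match_slot_def)
  also have "\<dots> = x" using r px by (simp add: red_matched_def)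
  finally show ?thesis using b by simp
qed

lemma match_slot_less: "matched lab i \<Longrightarrow> match_slot lab i < D"
  unfolding matched_def match_slot_def red_matched_def blue_matched_def using blue_choiceI accepted_slotI by auto

lemma rounds_label_cases: "rounds_label t lab i = Bot \<or> rounds_label t lab i = lab i"
  by (induction t) (auto simp: round_label_def)

end

definition state_array :: "(nat \<Rightarrow> label) \<Rightarrow> (nat \<Rightarrow> bool list) \<Rightarrow> nat \<Rightarrow> elem list" where
  "state_array lab pay n = map (\<lambda>i. (lab i, pay i)) [0..<n]"

definition swaps_via :: "(nat \<times> nat) list \<Rightarrow> elem list \<Rightarrow> elem list \<Rightarrow> bool" where
  "swaps_via P X Y \<longleftrightarrow> distinct (concat (map (\<lambda>(i,j). [i,j]) P)) \<and>
     (\<forall>(i,j)\<in>set P. i < length X \<and> j < length X \<and> opposite (fst (X!i)) (fst (X!j)) \<and>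
        Y!i = (Bot, snd (X!j)) \<and> Y!j = (Bot, snd (X!i))) \<and>
     (\<forall>k<length X. k \<notin> fst ` set P \<and> k \<notin> snd ` set P \<longrightarrow> Y!k = X!k)"

lemma legal_swap_iff_swaps_via: "legal_swap X Y \<longleftrightarrow> length Y = length X \<and> (\<exists>P. swaps_via P X Y)"
  unfolding legal_swap_def swaps_via_def by blast

lemma set_concat_pairs: "set (concat (map (\<lambda>(i,j). [i,j]) P)) = fst ` set P \<union> snd ` set P"
  by (induction P) auto

text \<open>Swapped positions become uncoloured, so a second swap cannot touch them again.\<close>
lemma swaps_via_support_disjoint:
  assumes "swaps_via P1 X Y" "swaps_via P2 Y Z"
  shows "(fst ` set P1 \<union> snd ` set P1) \<inter> (fst ` set P2 \<union> snd ` set P2) = {}"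
proof -
  have "fst (Y!k) = Bot" if "k \<in> fst ` set P1 \<union> snd ` set P1" for k
    using that assms(1) by (auto simp: swaps_via_def)
  moreover have "fst (Y!k) \<noteq> Bot" if "k \<in> fst ` set P2 \<union> snd ` set P2" for k
    using that assms(2) by (auto simp: swaps_via_def opposite_def)
  ultimately show ?thesis by blast
qed

lemma swaps_via_append:
  assumes P1: "swaps_via P1 X Y" and P2: "swaps_via P2 Y Z" and len: "length Y = length X"
  shows "swaps_via (P1 @ P2) X Z"
proof -
  let ?S1 = "fst ` set P1 \<union> snd ` set P1" and ?S2 = "fst ` set P2 \<union> snd ` set P2"
  note disj = swaps_via_support_disjoint[OF P1 P2]
  have swap1: "i < length X \<and> j < length X \<and> opposite (fst (X!i)) (fst (X!j)) \<and>
      Y!i = (Bot, snd (X!j)) \<and> Y!j = (Bot, snd (X!i))" if "(i,j) \<in> set P1" for i j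
    using P1 that unfolding swaps_via_def by fastforce
  have swap2: "i < length Y \<and> j < length Y \<and> opposite (fst (Y!i)) (fst (Y!j)) \<and>
      Z!i = (Bot, snd (Y!j)) \<and> Z!j = (Bot, snd (Y!i))" if "(i,j) \<in> set P2" for i j
    using P2 that unfolding swaps_via_def by fastforce
  have Y_X: "Y!k = X!k" if "k < length X" "k \<notin> ?S1" for k
    using P1 that unfolding swaps_via_def by blast
  have Z_Y: "Z!k = Y!k" if "k < length X" "k \<notin> ?S2" for k
    using P2 that len unfolding swaps_via_def by simp
  show ?thesis unfolding swaps_via_def
  proof (intro conjI)
    show "distinct (concat (map (\<lambda>(i,j). [i,j]) (P1 @ P2)))"
      using P1 P2 disj by (simp only: swaps_via_def map_append concat_append distinct_append set_concat_pairs)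
    show "\<forall>(i,j)\<in>set (P1 @ P2). i < length X \<and> j < length X \<and> opposite (fst (X!i)) (fst (X!j)) \<and>
        Z!i = (Bot, snd (X!j)) \<and> Z!j = (Bot, snd (X!i))"
    proof (clarsimp)
      fix i j assume ij: "(i,j) \<in> set P1 \<or> (i,j) \<in> set P2"
      show "i < length X \<and> j < length X \<and> opposite (fst (X!i)) (fst (X!j)) \<and>
        Z!i = (Bot, snd (X!j)) \<and> Z!j = (Bot, snd (X!i))"
      proof (cases "(i,j) \<in> set P1")
        case True
        hence "i \<in> ?S1" "j \<in> ?S1" by (auto intro: rev_image_eqI)
        hence "i \<notin> ?S2" "j \<notin> ?S2" using disj by blast+
        thus ?thesis using swap1[OF True] Z_Y by simp
      next
        case False
        hence P2ij: "(i,j) \<in> set P2" using ij by simp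
        hence "i \<in> ?S2" "j \<in> ?S2" by (auto intro: rev_image_eqI)
        hence "i \<notin> ?S1" "j \<notin> ?S1" using disj by blast+
        moreover have "i < length X" "j < length X" using swap2[OF P2ij] len by simp_all
        ultimately have "Y!i = X!i" "Y!j = X!j" using Y_X by simp_all
        thus ?thesis using swap2[OF P2ij] len by simp
      qed
    qed
    show "\<forall>k<length X. k \<notin> fst ` set (P1 @ P2) \<and> k \<notin> snd ` set (P1 @ P2) \<longrightarrow> Z!k = X!k"
    proof (intro allI impI)
      fix k assume "k < length X" "k \<notin> fst ` set (P1 @ P2) \<and> k \<notin> snd ` set (P1 @ P2)"
      hence "k < length X" "k \<notin> ?S1" "k \<notin> ?S2" by auto
      thus "Z!k = X!k" using Y_X Z_Y by simp
    qed
  qed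
qed

lemma legal_swap_trans:
  assumes "legal_swap X Y" "legal_swap Y Z" shows "legal_swap X Z"
  using assms swaps_via_append unfolding legal_swap_iff_swaps_via by metis

lemma distinct_concat_pairs:
  assumes "distinct xs" "inj_on f (set xs)" "f ` set xs \<inter> set xs = {}"
  shows "distinct (concat (map (\<lambda>x. [x, f x]) xs))"
  using assms
proof (induction xs)
  case Nil thus ?case by simp
next
  case (Cons a xs)
  have "set (concat (map (\<lambda>x. [x, f x]) xs)) = set xs \<union> f ` set xs" by auto
  thus ?case using Cons by (auto simp: inj_on_def)
qed

lemma legal_swap_pairing:
  assumes len: "length Y = length X"
    and pair: "\<And>x. x < length X \<Longrightarrow> S x \<Longrightarrow> p x < length X \<and> \<not> S (p x) \<and> p (p x) = x \<and>
                 opposite (fst (X!x)) (fst (X!p x)) \<and> Y!x = (Bot, snd (X!p x)) \<and> Y!p x = (Bot, snd (X!x))"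
    and rest: "\<And>k. k < length X \<Longrightarrow> \<not> S k \<Longrightarrow> (\<And>x. x < length X \<Longrightarrow> S x \<Longrightarrow> p x \<noteq> k) \<Longrightarrow> Y!k = X!k"
  shows "legal_swap X Y"
  unfolding legal_swap_def
proof (intro conjI exI[of _ "map (\<lambda>x. (x, p x)) (filter S [0..<length X])"])
  let ?xs = "filter S [0..<length X]"
  show "length Y = length X" by (rule len)
  have "distinct (concat (map (\<lambda>x. [x, p x]) ?xs))"
  proof (rule distinct_concat_pairs)
    show "inj_on p (set ?xs)" by (rule inj_on_inverseI[of _ p]) (use pair in auto)
    show "p ` set ?xs \<inter> set ?xs = {}" using pair by auto
  qed simp
  thus "distinct (concat (map (\<lambda>(i, j). [i, j]) (map (\<lambda>x. (x, p x)) ?xs)))"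
    by (simp add: comp_def)
  show "\<forall>(i, j)\<in>set (map (\<lambda>x. (x, p x)) ?xs). i < length X \<and> j < length X \<and>
          opposite (fst (X!i)) (fst (X!j)) \<and> Y!i = (Bot, snd (X!j)) \<and> Y!j = (Bot, snd (X!i))"
    using pair by auto
  show "\<forall>k<length X. k \<notin> fst ` set (map (\<lambda>x. (x, p x)) ?xs) \<and> k \<notin> snd ` set (map (\<lambda>x. (x, p x)) ?xs)
          \<longrightarrow> Y!k = X!k"
    using rest by (force simp: image_image)
qed

lemma partner_less:
  assumes "\<forall>i<n. \<forall>k<D. N i k < n" "matched N D lab i" "i < n"
  shows "partner N D lab i < n"
  using assms match_slot_less[OF assms(2)] by (simp add: partner_def)

lemma legal_swap_round:
  assumes rng: "\<forall>i<n. \<forall>k<D. N i k < n"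
  shows "legal_swap (state_array lab pay n) (state_array (round_label N D lab) (round_payload N D lab pay) n)"
proof (rule legal_swap_pairing[where S = "red_matched N D lab" and p = "partner N D lab"])
  fix x assume x: "x < length (state_array lab pay n)" "red_matched N D lab x"
  have "blue_matched N D lab (partner N D lab x)" "partner N D lab (partner N D lab x) = x"
    using red_matched_partner[OF x(2)] by auto
  thus "partner N D lab x < length (state_array lab pay n) \<and> \<not> red_matched N D lab (partner N D lab x) \<and>
    partner N D lab (partner N D lab x) = x \<and>
    opposite (fst (state_array lab pay n ! x)) (fst (state_array lab pay n ! partner N D lab x)) \<and>
    state_array (round_label N D lab) (round_payload N D lab pay) n ! x
      = (Bot, snd (state_array lab pay n ! partner N D lab x)) \<and>
    state_array (round_label N D lab) (round_payload N D lab pay) n ! partner N D lab x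
      = (Bot, snd (state_array lab pay n ! x))"
    using x partner_less[OF rng] red_matched_Red[OF x(2)] blue_matched_Blue not_red_and_blue_matched
    by (auto simp: state_array_def opposite_def round_label_def round_payload_def matched_def)
next
  fix k assume k: "k < length (state_array lab pay n)" "\<not> red_matched N D lab k"
    and not_partner: "\<And>x. x < length (state_array lab pay n) \<Longrightarrow> red_matched N D lab x \<Longrightarrow> partner N D lab x \<noteq> k"
  have "\<not> blue_matched N D lab k"
  proof
    assume b: "blue_matched N D lab k"
    hence "partner N D lab k < n" using partner_less[OF rng] k by (simp add: matched_def state_array_def)
    thus False using not_partner[of "partner N D lab k"] blue_matched_partner[OF b] by (simp add: state_array_def)
  qed
  thus "state_array (round_label N D lab) (round_payload N D lab pay) n ! k = state_array lab pay n ! k"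
    using k by (simp add: round_label_def round_payload_def matched_def state_array_def)
qed (simp add: state_array_def)

definition reds :: "nat \<Rightarrow> (nat \<Rightarrow> label) \<Rightarrow> nat set" where "reds n lab = {i. i < n \<and> lab i = Red}"
definition blues :: "nat \<Rightarrow> (nat \<Rightarrow> label) \<Rightarrow> nat set" where "blues n lab = {i. i < n \<and> lab i = Blue}"

lemma card_red_matched_eq_blue_matched:
  assumes rng: "\<forall>i<n. \<forall>k<D. N i k < n"
  shows "card {i. i < n \<and> red_matched N D lab i} = card {i. i < n \<and> blue_matched N D lab i}"
proof -
  note pn = partner_less[OF rng]
  have "bij_betw (partner N D lab) {i. i < n \<and> red_matched N D lab i} {i. i < n \<and> blue_matched N D lab i}"
  proof (rule bij_betw_byWitness[where f' = "partner N D lab"])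
    show "\<forall>a\<in>{i. i < n \<and> red_matched N D lab i}. partner N D lab (partner N D lab a) = a"
      using red_matched_partner by blast
    show "\<forall>a\<in>{i. i < n \<and> blue_matched N D lab i}. partner N D lab (partner N D lab a) = a"
      using blue_matched_partner by blast
    show "partner N D lab ` {i. i < n \<and> red_matched N D lab i} \<subseteq> {i. i < n \<and> blue_matched N D lab i}"
      using red_matched_partner pn unfolding matched_def by blast
    show "partner N D lab ` {i. i < n \<and> blue_matched N D lab i} \<subseteq> {i. i < n \<and> red_matched N D lab i}"
      using blue_matched_partner pn unfolding matched_def by blast
  qed
  thus ?thesis by (rule bij_betw_same_card)
qed

lemma card_reds_round:
  assumes "\<forall>i<n. \<forall>k<D. N i k < n"
  shows "card (reds n (round_label N D lab)) = card (reds n lab) - card {i. i < n \<and> blue_matched N D lab i}"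
proof -
  have "reds n (round_label N D lab) = reds n lab - {i. i < n \<and> red_matched N D lab i}"
    by (auto simp: reds_def round_label_def matched_def dest: blue_matched_Blue)
  moreover have "{i. i < n \<and> red_matched N D lab i} \<subseteq> reds n lab" by (auto simp: reds_def dest: red_matched_Red)
  ultimately show ?thesis
    by (simp add: card_Diff_subset finite_subset[of _ "{..<n}"] card_red_matched_eq_blue_matched[OF assms])
qed

lemma card_blues_round:
  "card (blues n (round_label N D lab)) = card (blues n lab) - card {i. i < n \<and> blue_matched N D lab i}"
proof -
  have "blues n (round_label N D lab) = blues n lab - {i. i < n \<and> blue_matched N D lab i}"
    by (auto simp: blues_def round_label_def matched_def dest: red_matched_Red)
  moreover have "{i. i < n \<and> blue_matched N D lab i} \<subseteq> blues n lab" by (auto simp: blues_def dest: blue_matched_Blue)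
  ultimately show ?thesis by (simp add: card_Diff_subset finite_subset[of _ "{..<n}"])
qed

lemma card_blue_matched_le_blues: "card {i. i < n \<and> blue_matched N D lab i} \<le> card (blues n lab)"
  unfolding blues_def by (intro card_mono) (auto dest: blue_matched_Blue)

lemma card_blue_matched_le_reds:
  assumes "\<forall>i<n. \<forall>k<D. N i k < n"
  shows "card {i. i < n \<and> blue_matched N D lab i} \<le> card (reds n lab)"
  unfolding card_red_matched_eq_blue_matched[OF assms, symmetric] reds_def
  by (intro card_mono) (auto dest: red_matched_Red)

lemma card_reds_without_blue_nb:
  assumes g: "sym_expander n D N" and b: "n < 512 * card (blues n lab)"
  shows "512 * card {x \<in> reds n lab. \<not> has_blue_nb N D lab x} \<le> n"
proof (rule ccontr)
  let ?A = "{x \<in> reds n lab. \<not> has_blue_nb N D lab x}"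
  assume "\<not> ?thesis"
  moreover have "?A \<subseteq> {..<n}" "blues n lab \<subseteq> {..<n}" "?A \<inter> blues n lab = {}"
    by (auto simp: reds_def blues_def)
  ultimately obtain a k where "a \<in> ?A" "k < D" "N a k \<in> blues n lab"
    using g b unfolding sym_expander_def by (meson not_le)
  thus False by (auto simp: has_blue_nb_def blues_def)
qed

text \<open>A red element with a blue neighbour proposes to it, and that blue element accepts some
  proposal, so the red element is one of the \<open>D\<close> neighbours of a matched blue element.\<close>
lemma card_reds_with_blue_nb:
  assumes g: "sym_expander n D N"
  shows "card {x \<in> reds n lab. has_blue_nb N D lab x} \<le> D * card {i. i < n \<and> blue_matched N D lab i}"
proof -
  have rng: "\<forall>i<n. \<forall>k<D. N i k < n" and rev: "\<forall>i<n. \<forall>k<D. \<exists>k'<D. N (N i k) k' = i"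
    using g unfolding sym_expander_def by blast+
  define M where "M = {i. i < n \<and> blue_matched N D lab i}"
  have "{x \<in> reds n lab. has_blue_nb N D lab x} \<subseteq> (\<Union>j\<in>M. N j ` {..<D})"
  proof
    fix x assume "x \<in> {x \<in> reds n lab. has_blue_nb N D lab x}"
    hence x: "x < n" "lab x = Red" "has_blue_nb N D lab x" by (auto simp: reds_def)
    define j where "j = N x (blue_choice N D lab x)"
    have choice: "blue_choice N D lab x < D" "lab j = Blue" using blue_choiceI[OF x(3)] by (auto simp: j_def)
    have "j < n" using rng x(1) choice(1) by (simp add: j_def)
    obtain k' where k': "k' < D" "N j k' = x" using rev x(1) choice(1) by (auto simp: j_def)
    have "proposes N D lab (N j k') j" using k' x by (simp add: proposes_def j_def)
    hence "blue_matched N D lab j" using k' choice(2) by (auto simp: blue_matched_def has_proposal_def)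
    hence "j \<in> M" using \<open>j < n\<close> by (simp add: M_def)
    thus "x \<in> (\<Union>j\<in>M. N j ` {..<D})" using k' by force
  qed
  hence "card {x \<in> reds n lab. has_blue_nb N D lab x} \<le> card (\<Union>j\<in>M. N j ` {..<D})"
    by (intro card_mono) (auto simp: M_def)
  also have "\<dots> \<le> (\<Sum>j\<in>M. card (N j ` {..<D}))" by (rule card_UN_le) (simp add: M_def)
  also have "\<dots> \<le> (\<Sum>j\<in>M. D)" by (intro sum_mono) (metis card_image_le card_lessThan finite_lessThan)
  also have "\<dots> = D * card M" by simp
  finally show ?thesis unfolding M_def .
qed

lemma reds_le_matched:
  assumes "sym_expander n D N" and "n < 512 * card (blues n lab)"
  shows "512 * card (reds n lab) \<le> 512 * D * card {i. i < n \<and> blue_matched N D lab i} + n"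
proof -
  have "card (reds n lab) = card {x \<in> reds n lab. has_blue_nb N D lab x} + card {x \<in> reds n lab. \<not> has_blue_nb N D lab x}"
    using card_Int_Diff[of "reds n lab" "{x. has_blue_nb N D lab x}"] by (simp add: reds_def Int_def set_diff_eq)
  thus ?thesis using card_reds_with_blue_nb[OF assms(1), of lab] card_reds_without_blue_nb[OF assms] by linarith
qed

lemma legal_swap_refl: "legal_swap X X"
  unfolding legal_swap_def by (intro conjI exI[of _ "[]"]) auto

lemma legal_swap_rounds:
  assumes "\<forall>i<n. \<forall>k<D. N i k < n"
  shows "legal_swap (state_array lab pay n) (state_array (rounds_label N D t lab) (rounds_payload N D t lab pay) n)"
proof (induction t)
  case 0 thus ?case using legal_swap_refl by simp
next
  case (Suc t) thus ?case using legal_swap_trans legal_swap_round[OF assms] by simp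
qed

lemma reds_minus_blues_rounds:
  assumes "\<forall>i<n. \<forall>k<D. N i k < n"
  shows "int (card (reds n (rounds_label N D t lab))) - int (card (blues n (rounds_label N D t lab)))
       = int (card (reds n lab)) - int (card (blues n lab))"
  by (induction t) (use card_reds_round[OF assms] card_blues_round card_blue_matched_le_reds[OF assms]
      card_blue_matched_le_blues in auto)

lemma min_colours_rounds:
  assumes g: "sym_expander n D N" and D1: "1 \<le> D"
  shows "real (min (card (reds n (rounds_label N D t lab))) (card (blues n (rounds_label N D t lab))))
           \<le> real n / 512 + (1 - 1 / real D) ^ t * real n"
proof (induction t)
  case 0
  have "card (reds n lab) \<le> n" unfolding reds_def by (rule order.trans[OF card_mono[of "{..<n}"]]) auto
  thus ?case by simp
next
  case (Suc t)
  have rng: "\<forall>i<n. \<forall>k<D. N i k < n" using g by (simp add: sym_expander_def)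
  define L where "L = rounds_label N D t lab"
  define r where "r = card (reds n L)"
  define b where "b = card (blues n L)"
  define M where "M = card {i. i < n \<and> blue_matched N D L i}"
  have step: "min (card (reds n (round_label N D L))) (card (blues n (round_label N D L))) = min r b - M"
    using card_reds_round[OF rng] card_blues_round card_blue_matched_le_reds[OF rng] card_blue_matched_le_blues
    by (auto simp: r_def b_def M_def min_def)
  have q0: "0 \<le> 1 - 1 / real D" using D1 by simp
  have "real (min r b - M) \<le> real n / 512 + (1 - 1 / real D) ^ Suc t * real n"
  proof (cases "512 * min r b \<le> n")
    case True
    have "real (min r b - M) \<le> real n / 512" using True by linarith
    thus ?thesis using q0 by (simp add: add_increasing2)
  next
    case False
    hence "n < 512 * b" "min r b \<le> r" by auto
    hence "512 * r \<le> 512 * D * M + n" using reds_le_matched[OF g, of L] by (simp add: r_def b_def M_def)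
    hence "real (512 * r) \<le> real (512 * D * M + n)" by (simp only: of_nat_le_iff)
    hence "real (min r b) \<le> real D * real M + real n / 512" using \<open>min r b \<le> r\<close> by simp
    moreover have "M \<le> min r b"
      using card_blue_matched_le_reds[OF rng] card_blue_matched_le_blues by (simp add: r_def b_def M_def)
    ultimately have "real (min r b - M) \<le> real n / 512 + (1 - 1 / real D) * (real (min r b) - real n / 512)"
      using D1 by (simp add: of_nat_diff field_simps)
    also have "\<dots> \<le> real n / 512 + (1 - 1 / real D) * ((1 - 1 / real D) ^ t * real n)"
      using Suc.IH q0 by (intro add_left_mono mult_left_mono) (auto simp: r_def b_def L_def)
    finally show ?thesis by simp
  qed
  thus ?case using step by (simp add: L_def)
qed

lemma num_label_state_array: "num_label l (state_array lab pay n) = card {i. i < n \<and> lab i = l}"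
  unfolding num_label_def state_array_def by (intro arg_cong[where f=card]) auto

lemma num_colored_state_array: "num_colored (state_array lab pay n) = card (reds n lab) + card (blues n lab)"
proof -
  have "{i. i < length (state_array lab pay n) \<and> colored (state_array lab pay n ! i)} = reds n lab \<union> blues n lab"
    by (auto simp: state_array_def colored_def reds_def blues_def) (metis label.exhaust)
  moreover have "reds n lab \<inter> blues n lab = {}" by (auto simp: reds_def blues_def)
  ultimately show ?thesis unfolding num_colored_def
    by (simp add: card_Un_disjoint reds_def blues_def)
qed

lemma one_minus_inverse_pow_le:
  assumes "D \<ge> (1::nat)"
  shows "(1 - 1 / real D) ^ (9*D) \<le> 1/512"
proof -
  have D0: "real D > 0" using assms by simp
  have "(1 - 1 / real D) ^ D \<le> exp (- 1 / real D) ^ D"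
    using assms exp_ge_add_one_self[of "- 1 / real D"] by (intro power_mono) (auto simp: field_simps)
  also have "exp (- 1 / real D) ^ D = exp (-1)" using D0 by (simp add: exp_of_nat_mult[symmetric])
  also have "exp (-1::real) \<le> 1/2"
  proof -
    have "exp (1::real) \<ge> 2" using exp_ge_add_one_self[of "1::real"] by simp
    thus ?thesis by (simp add: exp_minus field_simps)
  qed
  finally have h: "(1 - 1 / real D) ^ D \<le> 1/2" .
  have "(1 - 1 / real D) ^ (9*D) = ((1 - 1 / real D) ^ D) ^ 9" by (simp add: power_mult mult.commute)
  also have "\<dots> \<le> (1/2)^9"
    using h assms by (intro power_mono) (auto simp: field_simps)
  also have "(1/2::real)^9 = 1/512" by (simp add: power_divide)
  finally show ?thesis .
qed

lemma rounds_approx_swap_ok: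
  assumes g: "sym_expander n D N" and D1: "D \<ge> 1" and lI: "length I = n"
  shows "approx_swap_ok I (state_array (rounds_label N D (9*D) (\<lambda>i. if i < n then fst (I!i) else Bot))
                               (rounds_payload N D (9*D) (\<lambda>i. if i < n then fst (I!i) else Bot) (\<lambda>i. snd (I!i))) n)"
proof -
  define lab0 where "lab0 = (\<lambda>i. if i < n then fst (I!i) else Bot)"
  define pay0 where "pay0 = (\<lambda>i. snd (I!i))"
  define r where "r = card (reds n (rounds_label N D (9*D) lab0))"
  define b where "b = card (blues n (rounds_label N D (9*D) lab0))"
  have rng: "\<forall>i<n. \<forall>k<D. N i k < n" using g by (simp add: sym_expander_def)
  have I: "state_array lab0 pay0 n = I" using lI by (intro nth_equalityI) (auto simp: state_array_def lab0_def pay0_def)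
  have counts: "num_label Red I = card (reds n lab0)" "num_label Blue I = card (blues n lab0)"
    using I[symmetric] by (simp_all add: num_label_state_array reds_def blues_def)
  have "real (min r b) \<le> real n / 512 + 1/512 * real n"
    using min_colours_rounds[OF g D1, where t="9*D" and lab=lab0] one_minus_inverse_pow_le[OF D1]
      mult_right_mono[of "(1 - 1 / real D) ^ (9*D)" "1/512" "real n"] by (simp add: r_def b_def)
  moreover have "real r - real b = real (num_label Red I) - real (num_label Blue I)"
    using reds_minus_blues_rounds[OF rng, where t="9*D" and lab=lab0] counts by (simp add: r_def b_def)
  ultimately have "real r + real b \<le> real (length I) / 128 + \<bar>real (num_label Red I) - real (num_label Blue I)\<bar>"
    using lI by (simp add: min_def split: if_splits)
  moreover have "legal_swap I (state_array (rounds_label N D (9*D) lab0) (rounds_payload N D (9*D) lab0 pay0) n)"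
    using legal_swap_rounds[OF rng, where lab=lab0 and pay=pay0 and t="9*D"] I by simp
  ultimately show ?thesis
    unfolding approx_swap_ok_def lab0_def[symmetric] pay0_def[symmetric] by (simp add: num_colored_state_array r_def b_def)
qed

section \<open>Locality of the rounds\<close>

text \<open>The ball is enumerated as a list with repetitions, so its length depends only on \<open>D\<close> and the
  radius; this list fixes the inputs of the boolean gates.\<close>
fun ball :: "(nat \<Rightarrow> nat \<Rightarrow> nat) \<Rightarrow> nat \<Rightarrow> nat \<Rightarrow> nat \<Rightarrow> nat list" where
  "ball N D 0 i = [i]"
| "ball N D (Suc r) i = i # concat (map (\<lambda>k. ball N D r (N i k)) [0..<D])"

fun ball_size :: "nat \<Rightarrow> nat \<Rightarrow> nat" where
  "ball_size D 0 = 1"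
| "ball_size D (Suc r) = 1 + D * ball_size D r"

lemma length_ball: "length (ball N D r i) = ball_size D r"
proof (induction r arbitrary: i)
  case 0 thus ?case by simp
next
  case (Suc r)
  have "length (concat (map (\<lambda>k. ball N D r (N i k)) [0..<D])) = (\<Sum>k\<leftarrow>[0..<D]. ball_size D r)"
    by (simp add: length_concat comp_def Suc.IH)
  also have "\<dots> = D * ball_size D r" by (simp add: sum_list_triv)
  finally show ?case by simp
qed

lemma set_ball_Suc: "set (ball N D (Suc r) i) = insert i (\<Union>k<D. set (ball N D r (N i k)))"
  by auto

lemma ball_self: "i \<in> set (ball N D r i)" by (cases r) auto

lemma ball_mono_Suc: "set (ball N D r i) \<subseteq> set (ball N D (Suc r) i)"
proof (induction r arbitrary: i)
  case 0 thus ?case by simp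
next
  case (Suc r)
  have "set (ball N D (Suc r) i) = insert i (\<Union>k<D. set (ball N D r (N i k)))" by (rule set_ball_Suc)
  moreover have "set (ball N D (Suc (Suc r)) i) = insert i (\<Union>k<D. set (ball N D (Suc r) (N i k)))" by (rule set_ball_Suc)
  ultimately show ?case using Suc.IH by (simp only:) blast
qed

lemma ball_mono: "r \<le> s \<Longrightarrow> set (ball N D r i) \<subseteq> set (ball N D s i)"
proof (induction s rule: dec_induct)
  case base thus ?case by simp
next
  case (step s) thus ?case using ball_mono_Suc[of N D s i] by simp
qed

lemma ball_neighbour: "k < D \<Longrightarrow> set (ball N D r (N i k)) \<subseteq> set (ball N D (Suc r) i)"
  by auto

lemma ball_trans: "v \<in> set (ball N D a i) \<Longrightarrow> set (ball N D b v) \<subseteq> set (ball N D (a+b) i)"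
proof (induction a arbitrary: i)
  case 0 thus ?case by simp
next
  case (Suc a)
  from Suc.prems consider "v = i" | k where "k < D" "v \<in> set (ball N D a (N i k))" by auto
  thus ?case
  proof cases
    case 1 thus ?thesis using ball_mono[of b "Suc a + b" N D i] by simp
  next
    case 2
    hence "set (ball N D b v) \<subseteq> set (ball N D (a+b) (N i k))" using Suc.IH by blast
    also have "\<dots> \<subseteq> set (ball N D (Suc a + b) i)" using ball_neighbour[OF 2(1)] by simp
    finally show ?thesis .
  qed
qed

lemma ball_range: "(\<forall>i<n. \<forall>k<D. N i k < n) \<Longrightarrow> i < n \<Longrightarrow> v \<in> set (ball N D r i) \<Longrightarrow> v < n"
proof (induction r arbitrary: i)
  case 0 thus ?case by simp
next
  case (Suc r)
  from Suc.prems(3) consider "v = i" | k where "k < D" "v \<in> set (ball N D r (N i k))" by auto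
  thus ?case
  proof cases
    case 1 thus ?thesis using Suc.prems by simp
  next
    case 2 thus ?thesis using Suc.IH[of "N i k"] Suc.prems by blast
  qed
qed

definition agree_on :: "nat set \<Rightarrow> (nat \<Rightarrow> label) \<Rightarrow> (nat \<Rightarrow> label) \<Rightarrow> bool" where
  "agree_on S lab lab' \<longleftrightarrow> (\<forall>v\<in>S. lab v = lab' v)"

lemma agree_on_subset: "agree_on S lab lab' \<Longrightarrow> T \<subseteq> S \<Longrightarrow> agree_on T lab lab'"
  by (auto simp: agree_on_def)

lemma proposal_local:
  assumes "agree_on (set (ball N D 1 x)) lab lab'"
  shows "has_blue_nb N D lab x = has_blue_nb N D lab' x" "blue_choice N D lab x = blue_choice N D lab' x" "proposes N D lab x j = proposes N D lab' x j"
proof -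
  have a: "lab x = lab' x" "\<And>k. k < D \<Longrightarrow> lab (N x k) = lab' (N x k)"
    using assms by (auto simp: agree_on_def)
  show h: "has_blue_nb N D lab x = has_blue_nb N D lab' x" using a by (auto simp: has_blue_nb_def)
  have "\<And>k. (k < D \<and> lab (N x k) = Blue) = (k < D \<and> lab' (N x k) = Blue)" using a by auto
  thus p: "blue_choice N D lab x = blue_choice N D lab' x" unfolding blue_choice_def by simp
  show "proposes N D lab x j = proposes N D lab' x j" using a h p by (simp add: proposes_def)
qed

lemma acceptance_local:
  assumes "agree_on (set (ball N D 2 j)) lab lab'"
  shows "has_proposal N D lab j = has_proposal N D lab' j" "accepted_slot N D lab j = accepted_slot N D lab' j" "blue_matched N D lab j = blue_matched N D lab' j"
proof -
  have a: "lab j = lab' j" using assms ball_self by (auto simp: agree_on_def)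
  have b: "proposes N D lab (N j k) j' = proposes N D lab' (N j k) j'" if "k < D" for k j'
  proof (rule proposal_local)
    have "set (ball N D 1 (N j k)) \<subseteq> set (ball N D 2 j)" using ball_neighbour[OF that, of N 1 j] by (simp add: numeral_2_eq_2)
    thus "agree_on (set (ball N D 1 (N j k))) lab lab'" using assms agree_on_subset by blast
  qed
  show h: "has_proposal N D lab j = has_proposal N D lab' j" using b by (auto simp: has_proposal_def)
  have "\<And>k. (k < D \<and> proposes N D lab (N j k) j) = (k < D \<and> proposes N D lab' (N j k) j)" using b by auto
  thus p: "accepted_slot N D lab j = accepted_slot N D lab' j" unfolding accepted_slot_def by simp
  show "blue_matched N D lab j = blue_matched N D lab' j" using a h by (simp add: blue_matched_def)
qed

lemma round_local:
  assumes "agree_on (set (ball N D 3 x)) lab lab'"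
  shows "red_matched N D lab x = red_matched N D lab' x" "blue_matched N D lab x = blue_matched N D lab' x"
    "matched N D lab x = matched N D lab' x" "match_slot N D lab x = match_slot N D lab' x" "round_label N D lab x = round_label N D lab' x"
proof -
  have s1: "set (ball N D 1 x) \<subseteq> set (ball N D 3 x)" by (rule ball_mono) simp
  have s2: "set (ball N D 2 x) \<subseteq> set (ball N D 3 x)" by (rule ball_mono) simp
  have a1: "agree_on (set (ball N D 1 x)) lab lab'" using assms s1 agree_on_subset by blast
  have a2: "agree_on (set (ball N D 2 x)) lab lab'" using assms s2 agree_on_subset by blast
  have ax: "lab x = lab' x" using assms ball_self by (auto simp: agree_on_def)
  note l1 = proposal_local[OF a1]
  show b: "blue_matched N D lab x = blue_matched N D lab' x" using acceptance_local[OF a2] by simp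
  show r: "red_matched N D lab x = red_matched N D lab' x"
  proof (cases "has_blue_nb N D lab x")
    case False thus ?thesis using l1 by (simp add: red_matched_def)
  next
    case True
    hence choice: "blue_choice N D lab x < D" using blue_choiceI by blast
    define j where "j = N x (blue_choice N D lab x)"
    have "set (ball N D 2 j) \<subseteq> set (ball N D 3 x)" using ball_neighbour[OF choice, of N 2 x] by (simp add: j_def numeral_3_eq_3 numeral_2_eq_2)
    hence "agree_on (set (ball N D 2 j)) lab lab'" using assms agree_on_subset by blast
    note l2 = acceptance_local[OF this]
    show ?thesis using l1 l2 ax unfolding red_matched_def j_def by simp
  qed
  show m: "matched N D lab x = matched N D lab' x" using b r by (simp add: matched_def)
  show "match_slot N D lab x = match_slot N D lab' x"
  proof -
    have "accepted_slot N D lab x = accepted_slot N D lab' x" using acceptance_local[OF a2] by simp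
    thus ?thesis using r l1 by (simp add: match_slot_def)
  qed
  show "round_label N D lab x = round_label N D lab' x" using m ax by (simp add: round_label_def)
qed

lemma agree_on_round:
  assumes "agree_on (set (ball N D (r+3) i)) lab lab'"
  shows "agree_on (set (ball N D r i)) (round_label N D lab) (round_label N D lab')"
  unfolding agree_on_def
proof
  fix v assume v: "v \<in> set (ball N D r i)"
  have "set (ball N D 3 v) \<subseteq> set (ball N D (r+3) i)" by (rule ball_trans[OF v])
  hence "agree_on (set (ball N D 3 v)) lab lab'" using assms by (rule agree_on_subset[rotated])
  thus "round_label N D lab v = round_label N D lab' v" by (rule round_local(5))
qed

lemma agree_on_rounds:
  assumes "agree_on (set (ball N D (r + 3*t) i)) lab lab'"
  shows "agree_on (set (ball N D r i)) (rounds_label N D t lab) (rounds_label N D t lab')"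
  using assms
proof (induction t arbitrary: r)
  case 0 thus ?case by simp
next
  case (Suc t)
  have "agree_on (set (ball N D ((r+3) + 3*t) i)) lab lab'" using Suc.prems by (simp add: algebra_simps)
  hence "agree_on (set (ball N D (r+3) i)) (rounds_label N D t lab) (rounds_label N D t lab')" by (rule Suc.IH)
  from agree_on_round[OF this] show ?case by simp
qed

section \<open>Evaluating straight-line circuits\<close>

lemma length_fold_snoc: "length (fold (\<lambda>g vs. vs @ [h vs g]) gs v0) = length v0 + length gs"
  by (induction gs rule: rev_induct) auto

lemma nth_fold_snoc:
  "j < length gs \<Longrightarrow> fold (\<lambda>g vs. vs @ [h vs g]) gs v0 ! (length v0 + j)
     = h (take (length v0 + j) (fold (\<lambda>g vs. vs @ [h vs g]) gs v0)) (gs ! j)"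
proof (induction gs rule: rev_induct)
  case Nil thus ?case by simp
next
  case (snoc g gs)
  let ?F = "fold (\<lambda>g vs. vs @ [h vs g]) gs v0"
  have lF: "length ?F = length v0 + length gs" by (rule length_fold_snoc)
  show ?case
  proof (cases "j < length gs")
    case True
    thus ?thesis using snoc.IH lF by (simp add: nth_append)
  next
    case False
    hence j: "j = length gs" using snoc.prems by simp
    thus ?thesis using lF by (simp add: nth_append)
  qed
qed

lemma take_fold_snoc:
  "n \<le> length v0 \<Longrightarrow> take n (fold (\<lambda>g vs. vs @ [h vs g]) gs v0) = take n v0"
  by (induction gs rule: rev_induct) (auto simp: length_fold_snoc)

lemma eval_gate_take:
  assumes a: "\<forall>x\<in>set (gate_ins g). x < m" shows "eval_gate (take m vs) g = eval_gate vs g"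
proof (cases g)
  case (BoolG ins f)
  have "map (\<lambda>i. getb (take m vs ! i)) ins = map (\<lambda>i. getb (vs ! i)) ins"
    using a BoolG by (intro map_cong) auto
  thus ?thesis using BoolG by (simp del: map_eq_conv)
next
  case (SelG b x y) thus ?thesis using a by auto
qed

lemma eval_wires_gate:
  assumes "j < length (gates C)" "\<forall>x\<in>set (gate_ins (gates C ! j)). x < length (concat (map encode_elem I)) + j"
  shows "eval_wires C I ! (length (concat (map encode_elem I)) + j) = eval_gate (eval_wires C I) (gates C ! j)"
  using nth_fold_snoc[OF assms(1), of eval_gate "concat (map encode_elem I)"] eval_gate_take[OF assms(2)]
  unfolding eval_wires_def by simp

lemma eval_wires_input:
  "x < length (concat (map encode_elem I)) \<Longrightarrow> eval_wires C I ! x = concat (map encode_elem I) ! x"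
proof -
  assume x: "x < length (concat (map encode_elem I))"
  have "take (length (concat (map encode_elem I))) (eval_wires C I) = concat (map encode_elem I)"
    unfolding eval_wires_def by (subst take_fold_snoc) auto
  thus ?thesis using x by (metis nth_take)
qed

lemma nth_concat_const_length:
  assumes "\<forall>x\<in>set ys. length (f x) = c" "v < length ys" "r < c"
  shows "concat (map f ys) ! (c * v + r) = f (ys ! v) ! r"
  using assms
proof (induction ys arbitrary: v)
  case Nil thus ?case by simp
next
  case (Cons y ys)
  show ?case
  proof (cases v)
    case 0 thus ?thesis using Cons.prems by (simp add: nth_append)
  next
    case (Suc w)
    have "concat (map f (y # ys)) ! (c * v + r) = concat (map f ys) ! (c * w + r)"
      using Cons.prems Suc by (simp add: nth_append)
    also have "\<dots> = f (ys ! w) ! r" using Cons Suc by simp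
    finally show ?thesis using Suc by simp
  qed
qed

lemma length_concat_const: "\<forall>x\<in>set ys. length (f x) = c \<Longrightarrow> length (concat (map f ys)) = c * length ys"
  by (induction ys) auto

lemma length_encode_input: "length (concat (map encode_elem I)) = 3 * length I"
  by (rule length_concat_const) (simp add: encode_elem_def)

lemma nth_encode_input:
  assumes "v < length I" "r < 3"
  shows "concat (map encode_elem I) ! (3 * v + r) = encode_elem (I ! v) ! r"
  using nth_concat_const_length[of I encode_elem 3 v r] assms by (simp add: encode_elem_def)

lemma length_input_kinds: "length (input_kinds n) = 3 * n"
  unfolding input_kinds_def by (simp add: length_concat sum_list_replicate)

lemma nth_input_kinds:
  assumes "v < n" "r < 3"
  shows "input_kinds n ! (3 * v + r) = [KBit, KBit, KWord] ! r"
proof -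
  have "input_kinds n = concat (map (\<lambda>_. [KBit, KBit, KWord]) [0..<n])"
    by (simp add: input_kinds_def map_replicate_trivial)
  thus ?thesis using nth_concat_const_length[of "[0..<n]" "\<lambda>_. [KBit, KBit, KWord]" 3 v r] assms by simp
qed

lemma gate_typed_take: "gate_typed (take m ks) g \<Longrightarrow> \<forall>x\<in>set (gate_ins g). x < m"
  by (cases g) auto

lemma Max_insert_0_le: "finite S \<Longrightarrow> (\<forall>x\<in>S. x \<le> (b::nat)) \<Longrightarrow> Max (insert 0 S) \<le> b"
  by (simp add: Max_le_iff)

lemma length_filter_concat: "length (filter P (concat xss)) = (\<Sum>xs\<leftarrow>xss. length (filter P xs))"
  by (induction xss) auto

lemma sum_list_indicator_le_1:
  "(\<Sum>idx\<leftarrow>[0..<M]. (if c + idx = v then 1 else 0::nat)) \<le> 1"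
proof -
  have "(\<Sum>idx\<leftarrow>[0..<M]. (if c + idx = v then 1 else 0::nat)) = (\<Sum>idx\<in>{0..<M}. (if idx = v - c \<and> c \<le> v then 1 else 0))"
    by (simp add: sum_set_upt_conv_sum_list_nat[symmetric]) (intro sum.cong, auto)
  also have "\<dots> \<le> 1"
  proof (cases "c \<le> v")
    case True thus ?thesis by (simp add: sum.delta)
  next
    case False thus ?thesis by simp
  qed
  finally show ?thesis .
qed

section \<open>The swapper circuit\<close>

fun decode_labels :: "bool list \<Rightarrow> label list" where
  "decode_labels (c # r # rest) = decode_label c r # decode_labels rest"
| "decode_labels _ = []"

lemma decode_labels_pairs: "decode_labels (concat (map (\<lambda>v. [c v, r v]) L)) = map (\<lambda>v. decode_label (c v) (r v)) L"
  by (induction L) auto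

lemma decode_label_fst: "decode_label (fst e \<noteq> Bot) (fst e = Red) = fst e"
  by (cases "fst e") (auto simp: decode_label_def)

text \<open>Wire layout: the \<open>3n\<close> input wires; then the flag gates, one for each round \<open>t < T\<close>,
  vertex \<open>i < n\<close> and slot \<open>k < D\<close> (gate number \<open>(t n + i) D + k\<close>), telling whether \<open>i\<close> is matched in
  round \<open>t\<close> through its \<open>k\<close>-th neighbour; then one gate per vertex computing its final coloured bit;
  then the selector gates, in the same order as the flag gates. The selectors of \<open>(t, i)\<close> form a
  chain that starts from the payload of \<open>i\<close> before round \<open>t\<close> and replaces it by the payload of
  neighbour \<open>k\<close> when flag \<open>(t, i, k)\<close> is set. The output red bit is the input one, as labels
  only ever change to \<open>Bot\<close>.\<close>

context
  fixes n D T :: nat and N :: "nat \<Rightarrow> nat \<Rightarrow> nat"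
begin

definition n_flags :: nat where
  "n_flags = T*n*D"

definition sel_base :: nat where
  "sel_base = 3*n + n_flags + n"

definition sel_wire :: "nat \<Rightarrow> nat \<Rightarrow> nat \<Rightarrow> nat" where
  "sel_wire t i k = sel_base + ((t*n+i)*D + k)"

definition payload_wire :: "nat \<Rightarrow> nat \<Rightarrow> nat" where
  "payload_wire t v = (if t = 0 then 3*v+2 else sel_wire (t-1) v (D-1))"

definition chain_wire :: "nat \<Rightarrow> nat \<Rightarrow> nat \<Rightarrow> nat" where
  "chain_wire t i k = (if k = 0 then payload_wire t i else sel_wire t i (k-1))"

definition view :: "nat \<Rightarrow> nat list" where
  "view i = ball N D (3*T) i"

definition view_wires :: "nat \<Rightarrow> nat list" where
  "view_wires i = concat (map (\<lambda>v. [3*v, 3*v+1]) (view i))"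

definition view_labelling :: "nat \<Rightarrow> bool list \<Rightarrow> nat \<Rightarrow> label" where
  "view_labelling i bs =
     (\<lambda>v. case map_of (zip (view i) (decode_labels bs)) v of Some l \<Rightarrow> l | None \<Rightarrow> Bot)"

definition flag_fun :: "nat \<Rightarrow> nat \<Rightarrow> nat \<Rightarrow> bool list \<Rightarrow> bool" where
  "flag_fun t i k bs \<longleftrightarrow> matched N D (rounds_label N D t (view_labelling i bs)) i \<and>
     match_slot N D (rounds_label N D t (view_labelling i bs)) i = k"

definition colored_fun :: "nat \<Rightarrow> bool list \<Rightarrow> bool" where
  "colored_fun i bs \<longleftrightarrow> rounds_label N D T (view_labelling i bs) i \<noteq> Bot"

definition idx_round :: "nat \<Rightarrow> nat" where
  "idx_round idx = idx div (n*D)"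

definition idx_vertex :: "nat \<Rightarrow> nat" where
  "idx_vertex idx = idx div D mod n"

definition idx_slot :: "nat \<Rightarrow> nat" where
  "idx_slot idx = idx mod D"

definition flag_gate :: "nat \<Rightarrow> gate" where
  "flag_gate idx = BoolG (view_wires (idx_vertex idx)) (flag_fun (idx_round idx) (idx_vertex idx) (idx_slot idx))"

definition colored_gate :: "nat \<Rightarrow> gate" where
  "colored_gate i = BoolG (view_wires i) (colored_fun i)"

definition sel_gate :: "nat \<Rightarrow> gate" where
  "sel_gate idx = SelG (3*n + idx) (chain_wire (idx_round idx) (idx_vertex idx) (idx_slot idx))
     (payload_wire (idx_round idx) (N (idx_vertex idx) (idx_slot idx)))"

definition swapper_circuit :: circuit where
  "swapper_circuit =
     \<lparr>gates = map flag_gate [0..<n_flags] @ map colored_gate [0..<n] @ map sel_gate [0..<n_flags],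
      outs = map (\<lambda>i. (3*n + n_flags + i, 3*i+1, payload_wire T i)) [0..<n]\<rparr>"

lemma idx_encode:
  assumes "t < T" "i < n" "k < D"
  shows "(t*n+i)*D+k < n_flags" "idx_round ((t*n+i)*D+k) = t" "idx_vertex ((t*n+i)*D+k) = i" "idx_slot ((t*n+i)*D+k) = k"
proof -
  have "(t*n+i)*D+k < (t*n+i+1)*D" using assms by simp
  also have "\<dots> \<le> (t*n+n)*D" using assms by (intro mult_right_mono) auto
  also have "\<dots> = (t+1)*n*D" by (simp add: algebra_simps)
  also have "\<dots> \<le> T*n*D" using assms by (intro mult_right_mono) auto
  finally show "(t*n+i)*D+k < n_flags" by (simp add: n_flags_def)
  have dD: "((t*n+i)*D+k) div D = t*n+i" using assms by simp
  show "idx_slot ((t*n+i)*D+k) = k" using assms by (simp add: idx_slot_def)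
  show "idx_vertex ((t*n+i)*D+k) = i" using assms dD by (simp add: idx_vertex_def)
  have "((t*n+i)*D+k) div (n*D) = ((t*n+i)*D+k) div D div n" by (simp add: div_mult2_eq mult.commute)
  also have "\<dots> = t" using dD assms by simp
  finally show "idx_round ((t*n+i)*D+k) = t" by (simp add: idx_round_def)
qed

lemma idx_decode:
  assumes "idx < n_flags"
  shows "idx = (idx_round idx * n + idx_vertex idx) * D + idx_slot idx" "idx_round idx < T" "idx_vertex idx < n" "idx_slot idx < D"
proof -
  have D0: "D > 0" and n0: "n > 0" using assms by (auto simp: n_flags_def intro: gr0I)
  have "idx div D = (idx div D div n) * n + idx div D mod n" by simp
  moreover have "idx div D div n = idx div (n*D)" by (simp add: div_mult2_eq mult.commute)
  ultimately have "idx div D = idx_round idx * n + idx_vertex idx" by (simp add: idx_round_def idx_vertex_def)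
  thus "idx = (idx_round idx * n + idx_vertex idx) * D + idx_slot idx" by (metis div_mult_mod_eq idx_slot_def)
  show "idx_round idx < T" using assms by (simp add: idx_round_def n_flags_def less_mult_imp_div_less mult.assoc)
  show "idx_vertex idx < n" using n0 by (simp add: idx_vertex_def)
  show "idx_slot idx < D" using D0 by (simp add: idx_slot_def)
qed

lemma length_gates: "length (gates swapper_circuit) = 2*n_flags + n" by (simp add: swapper_circuit_def)

lemma nth_gates_flag: "j < n_flags \<Longrightarrow> gates swapper_circuit ! j = flag_gate j"
  by (simp add: swapper_circuit_def nth_append)
lemma nth_gates_colored: "i < n \<Longrightarrow> gates swapper_circuit ! (n_flags + i) = colored_gate i"
  by (simp add: swapper_circuit_def nth_append)
lemma nth_gates_sel: "idx < n_flags \<Longrightarrow> gates swapper_circuit ! (n_flags + n + idx) = sel_gate idx"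
  by (simp add: swapper_circuit_def nth_append)

lemma sel_wire_eq: "sel_wire t i k = 3*n + (n_flags + n + ((t*n+i)*D+k))"
  by (simp add: sel_wire_def sel_base_def)

end

context
  fixes n D T :: nat and N :: "nat \<Rightarrow> nat \<Rightarrow> nat"
  assumes D1: "D \<ge> 1" and T1: "T \<ge> 1" and rng: "\<forall>i<n. \<forall>k<D. N i k < n"
begin

abbreviation "kinds \<equiv> wire_kinds n (swapper_circuit n D T N)"

lemma length_kinds: "length kinds = 3*n + 2 * n_flags n D T + n"
  by (simp add: wire_kinds_def length_input_kinds length_gates)

lemma kinds_input: assumes "v < n" shows "kinds ! (3*v) = KBit" "kinds ! (3*v+1) = KBit" "kinds ! (3*v+2) = KWord"
proof -
  have "3*v+2 < length (input_kinds n)" using assms by (simp add: length_input_kinds)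
  hence a: "kinds ! (3*v + r) = input_kinds n ! (3*v + r)" if "r < 3" for r
    using that by (simp add: wire_kinds_def nth_append)
  show "kinds ! (3*v) = KBit" using a[of 0] nth_input_kinds[OF assms, of 0] by simp
  show "kinds ! (3*v+1) = KBit" using a[of 1] nth_input_kinds[OF assms, of 1] by simp
  show "kinds ! (3*v+2) = KWord" using a[of 2] nth_input_kinds[OF assms, of 2] by simp
qed

lemma kinds_gate: "j < 2 * n_flags n D T + n \<Longrightarrow> kinds ! (3*n + j) = gate_kind (gates (swapper_circuit n D T N) ! j)"
  by (simp add: wire_kinds_def nth_append length_input_kinds length_gates)

lemma kinds_flag: "idx < n_flags n D T \<Longrightarrow> kinds ! (3*n + idx) = KBit"
  using kinds_gate[of idx] nth_gates_flag[of idx n D T N] by (simp add: flag_gate_def)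

lemma kinds_colored: "i < n \<Longrightarrow> kinds ! (3*n + n_flags n D T + i) = KBit"
  using kinds_gate[of "n_flags n D T + i"] nth_gates_colored[of i n D T N] by (simp add: colored_gate_def add.assoc)

lemma kinds_sel: "idx < n_flags n D T \<Longrightarrow> kinds ! (3*n + (n_flags n D T + n + idx)) = KWord"
  using kinds_gate[of "n_flags n D T + n + idx"] nth_gates_sel[of idx n D T N] by (simp add: sel_gate_def)

lemma sel_wire_props:
  assumes "t < T" "i < n" "k < D"
  shows "sel_wire n D T t i k < length kinds" "kinds ! (sel_wire n D T t i k) = KWord" "sel_wire n D T t i k = sel_base n D T + ((t*n+i)*D+k)"
proof -
  have idx: "(t*n+i)*D+k < n_flags n D T" using idx_encode[OF assms] by simp
  show "sel_wire n D T t i k < length kinds" using idx by (simp add: sel_wire_def sel_base_def length_kinds)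
  show "kinds ! (sel_wire n D T t i k) = KWord" using kinds_sel[OF idx] by (simp add: sel_wire_def sel_base_def add.assoc)
  show "sel_wire n D T t i k = sel_base n D T + ((t*n+i)*D+k)" by (simp add: sel_wire_def)
qed

lemma payload_wire_props:
  assumes "t \<le> T" "v < n"
  shows "payload_wire n D T t v < length kinds" "kinds ! (payload_wire n D T t v) = KWord" "payload_wire n D T t v < sel_base n D T + t*n*D"
proof -
  have "payload_wire n D T t v < length kinds \<and> kinds ! (payload_wire n D T t v) = KWord \<and> payload_wire n D T t v < sel_base n D T + t*n*D"
  proof (cases t)
    case 0
    thus ?thesis using kinds_input[OF assms(2)] assms length_kinds by (simp add: payload_wire_def sel_base_def)
  next
    case (Suc s)
    have s: "s < T" using assms Suc by simp
    have D0: "D - 1 < D" using D1 by simp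
    have "(s*n+v)*D + (D-1) < (s*n+v+1)*D" using D1 by (simp add: algebra_simps)
    also have "\<dots> \<le> (s*n+n)*D" using assms by (intro mult_right_mono) auto
    also have "\<dots> = t*n*D" using Suc by (simp add: algebra_simps)
    finally have "(s*n+v)*D + (D-1) < t*n*D" .
    thus ?thesis using sel_wire_props[OF s assms(2) D0] Suc by (simp add: payload_wire_def)
  qed
  thus "payload_wire n D T t v < length kinds" "kinds ! (payload_wire n D T t v) = KWord" "payload_wire n D T t v < sel_base n D T + t*n*D" by auto
qed

lemma view_wires_props:
  assumes "i < n" "x \<in> set (view_wires D T N i)"
  shows "x < 3*n" "x < length kinds" "kinds ! x = KBit"
proof -
  obtain v where v: "v \<in> set (view D T N i)" "x = 3*v \<or> x = 3*v+1" using assms(2) by (auto simp: view_wires_def)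
  have vn: "v < n" using ball_range[OF rng assms(1)] v(1) by (simp add: view_def)
  show "x < 3*n" using v vn by auto
  thus "x < length kinds" using length_kinds by simp
  show "kinds ! x = KBit" using v kinds_input[OF vn] by auto
qed

lemma sel_gate_typed:
  assumes idxM: "idx < n_flags n D T"
  shows "gate_typed (take (sel_base n D T + idx) kinds) (sel_gate n D T N idx)"
proof -
  note dec = idx_decode[OF idxM]
  define t where "t = idx_round n D idx"
  define i where "i = idx_vertex n D idx"
  define k where "k = idx_slot D idx"
  have tik: "t < T" "i < n" "k < D" "idx = (t*n+i)*D+k" using dec by (auto simp: t_def i_def k_def)
  have early: "t*n*D \<le> idx" using tik by (simp add: algebra_simps)
  have flag: "3*n + idx < sel_base n D T + idx" "kinds ! (3*n+idx) = KBit" "3*n + idx < length kinds"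
    using idxM kinds_flag[OF idxM] tik(2) length_kinds by (auto simp: sel_base_def)
  have chain: "chain_wire n D T t i k < sel_base n D T + idx \<and> kinds ! (chain_wire n D T t i k) = KWord \<and>
      chain_wire n D T t i k < length kinds"
  proof (cases "k = 0")
    case True
    have "payload_wire n D T t i < sel_base n D T + idx" using payload_wire_props(3)[of t i] tik early by linarith
    thus ?thesis using payload_wire_props(1,2)[of t i] tik True by (simp add: chain_wire_def)
  next
    case False
    hence "k - 1 < D" using tik by simp
    thus ?thesis using sel_wire_props[OF tik(1,2), of "k-1"] tik False by (simp add: chain_wire_def)
  qed
  have "N i k < n" using rng tik by simp
  moreover have "payload_wire n D T t (N i k) < sel_base n D T + idx" if "N i k < n"
    using payload_wire_props(3)[OF _ that, of t] tik early by linarith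
  ultimately have "payload_wire n D T t (N i k) < sel_base n D T + idx \<and>
      kinds ! (payload_wire n D T t (N i k)) = KWord \<and> payload_wire n D T t (N i k) < length kinds"
    using payload_wire_props(1,2)[of t "N i k"] tik by simp
  thus ?thesis using flag chain by (simp add: sel_gate_def t_def[symmetric] i_def[symmetric] k_def[symmetric])
qed

lemma view_gate_typed:
  assumes "i < n" "3*n \<le> m"
  shows "gate_typed (take m kinds) (BoolG (view_wires D T N i) f)"
proof -
  have "x < length (take m kinds) \<and> take m kinds ! x = KBit" if "x \<in> set (view_wires D T N i)" for x
    using view_wires_props[OF assms(1) that] assms(2) by simp
  thus ?thesis by (simp only: gate_typed.simps) blast
qed

lemma wf_swapper_circuit: "wf_circuit n (swapper_circuit n D T N)"
  unfolding wf_circuit_def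
proof (intro conjI allI impI ballI)
  fix j assume j: "j < length (gates (swapper_circuit n D T N))"
  let ?M = "n_flags n D T"
  consider (flag) "j < ?M" | (colored) "?M \<le> j" "j < ?M + n" | (sel) "?M + n \<le> j" using j by linarith
  thus "gate_typed (take (3*n + j) kinds) (gates (swapper_circuit n D T N) ! j)"
  proof cases
    case flag
    have "idx_vertex n D j < n" using idx_decode[OF flag] by simp
    thus ?thesis unfolding nth_gates_flag[OF flag] flag_gate_def by (rule view_gate_typed) simp
  next
    case colored
    then obtain i where i: "i < n" "j = ?M + i" by (metis add_less_cancel_left le_Suc_ex)
    show ?thesis unfolding i(2) nth_gates_colored[OF i(1)] colored_gate_def
      by (rule view_gate_typed[OF i(1)]) simp
  next
    case sel
    then obtain idx where idx: "j = ?M + n + idx" by (metis le_Suc_ex)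
    hence idxM: "idx < ?M" using j length_gates by simp
    have "3*n + j = sel_base n D T + idx" using idx by (simp add: sel_base_def)
    thus ?thesis unfolding idx nth_gates_sel[OF idxM] using sel_gate_typed[OF idxM] by (simp only: idx)
  qed
next
  show "length (outs (swapper_circuit n D T N)) = n" by (simp add: swapper_circuit_def)
next
  fix x assume "x \<in> set (outs (swapper_circuit n D T N))"
  then obtain i where i: "i < n" "x = (3*n + n_flags n D T + i, 3*i+1, payload_wire n D T T i)"
    by (auto simp: swapper_circuit_def)
  show "case x of (a, b, p) \<Rightarrow> a < length kinds \<and> b < length kinds \<and> p < length kinds \<and>
          kinds ! a = KBit \<and> kinds ! b = KBit \<and> kinds ! p = KWord"
    using i kinds_colored[OF i(1)] kinds_input[OF i(1)] payload_wire_props[of T i] length_kinds by simp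
qed

context
  fixes I :: "elem list"
  assumes lI: "length I = n"
begin

abbreviation "wires \<equiv> eval_wires (swapper_circuit n D T N) I"
abbreviation "lab0 \<equiv> (\<lambda>i. if i < n then fst (I!i) else Bot)"
abbreviation "pay0 \<equiv> (\<lambda>i. snd (I!i))"

lemma wires_gate: "j < 2 * n_flags n D T + n \<Longrightarrow> wires ! (3*n + j) = eval_gate wires (gates (swapper_circuit n D T N) ! j)"
proof -
  assume j: "j < 2 * n_flags n D T + n"
  have "gate_typed (take (3*n + j) (wire_kinds n (swapper_circuit n D T N))) (gates (swapper_circuit n D T N) ! j)"
    using wf_swapper_circuit j length_gates unfolding wf_circuit_def by auto
  hence "\<forall>x\<in>set (gate_ins (gates (swapper_circuit n D T N) ! j)). x < 3*n + j" by (rule gate_typed_take)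
  thus ?thesis using eval_wires_gate[of j "swapper_circuit n D T N" I] j length_gates length_encode_input lI by simp
qed

lemma wires_input: assumes "v < n" "r < 3" shows "wires ! (3*v + r) = encode_elem (I!v) ! r"
proof -
  have "3*v + r < length (concat (map encode_elem I))" using assms length_encode_input lI by simp
  thus ?thesis using eval_wires_input nth_encode_input assms lI by simp
qed

lemma agree_on_view:
  assumes i: "i < n"
  shows "agree_on (set (view D T N i)) lab0 (view_labelling D T N i (map (\<lambda>x. getb (wires ! x)) (view_wires D T N i)))"
proof -
  let ?L = "view D T N i"
  have Ln: "v < n" if "v \<in> set ?L" for v using ball_range[OF rng i] that by (simp add: view_def)
  have "map (\<lambda>x. getb (wires ! x)) (view_wires D T N i) = concat (map (\<lambda>v. [fst (I!v) \<noteq> Bot, fst (I!v) = Red]) ?L)"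
    unfolding view_wires_def map_concat
    by (rule arg_cong[where f=concat]) (auto intro!: map_cong simp: Ln wires_input[of _ 0, simplified] wires_input[of _ 1, simplified] encode_elem_def)
  hence "decode_labels (map (\<lambda>x. getb (wires ! x)) (view_wires D T N i)) = map lab0 ?L"
    by (simp add: decode_labels_pairs decode_label_fst Ln)
  thus ?thesis unfolding agree_on_def view_labelling_def by (simp add: map_of_zip_map)
qed

lemma wires_flag:
  assumes t: "t < T" and i: "i < n" and k: "k < D"
  shows "wires ! (3*n + ((t*n+i)*D+k)) = VB (matched N D (rounds_label N D t lab0) i \<and> match_slot N D (rounds_label N D t lab0) i = k)"
proof -
  define idx where "idx = (t*n+i)*D+k"
  note e = idx_encode[OF t i k, folded idx_def]
  have g: "gates (swapper_circuit n D T N) ! idx = BoolG (view_wires D T N i) (flag_fun D T N t i k)"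
    using nth_gates_flag[OF e(1)] e by (simp add: flag_gate_def)
  define bs where "bs = map (\<lambda>x. getb (wires ! x)) (view_wires D T N i)"
  have ag: "agree_on (set (view D T N i)) lab0 (view_labelling D T N i bs)" using agree_on_view[OF i] by (simp add: bs_def)
  have "set (ball N D (3 + 3*t) i) \<subseteq> set (view D T N i)" unfolding view_def by (rule ball_mono) (use t in simp)
  hence "agree_on (set (ball N D (3 + 3*t) i)) lab0 (view_labelling D T N i bs)" using ag agree_on_subset by blast
  hence "agree_on (set (ball N D 3 i)) (rounds_label N D t lab0) (rounds_label N D t (view_labelling D T N i bs))" by (rule agree_on_rounds)
  note l = round_local[OF this]
  have "wires ! (3*n + idx) = VB (flag_fun D T N t i k bs)" using wires_gate[of idx] e g by (simp add: bs_def)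
  thus ?thesis using l by (simp add: flag_fun_def idx_def)
qed

lemma wires_colored:
  assumes i: "i < n"
  shows "wires ! (3*n + n_flags n D T + i) = VB (rounds_label N D T lab0 i \<noteq> Bot)"
proof -
  have g: "gates (swapper_circuit n D T N) ! (n_flags n D T + i) = BoolG (view_wires D T N i) (colored_fun D T N i)"
    using nth_gates_colored[OF i] by (simp add: colored_gate_def)
  define bs where "bs = map (\<lambda>x. getb (wires ! x)) (view_wires D T N i)"
  have ag: "agree_on (set (view D T N i)) lab0 (view_labelling D T N i bs)" using agree_on_view[OF i] by (simp add: bs_def)
  hence "agree_on (set (ball N D (0 + 3*T) i)) lab0 (view_labelling D T N i bs)" by (simp add: view_def)
  hence "agree_on (set (ball N D 0 i)) (rounds_label N D T lab0) (rounds_label N D T (view_labelling D T N i bs))" by (rule agree_on_rounds)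
  hence "rounds_label N D T lab0 i = rounds_label N D T (view_labelling D T N i bs) i" by (simp add: agree_on_def)
  moreover have "wires ! (3*n + (n_flags n D T + i)) = VB (colored_fun D T N i bs)" using wires_gate[of "n_flags n D T + i"] g i by (simp add: bs_def)
  ultimately show ?thesis by (simp add: colored_fun_def add.assoc)
qed

abbreviation "Lt t \<equiv> rounds_label N D t lab0"
abbreviation "Pt t \<equiv> rounds_payload N D t lab0 pay0"

lemma wires_sel_gate:
  assumes t: "t < T" and i: "i < n" and k: "k < D"
  shows "wires ! (sel_wire n D T t i k) =
           (if matched N D (Lt t) i \<and> match_slot N D (Lt t) i = k
            then wires ! (payload_wire n D T t (N i k)) else wires ! (chain_wire n D T t i k))"
proof -
  define idx where "idx = (t*n+i)*D + k"
  note e = idx_encode[OF t i k, folded idx_def]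
  have "gates (swapper_circuit n D T N) ! (n_flags n D T + n + idx)
          = SelG (3*n + idx) (chain_wire n D T t i k) (payload_wire n D T t (N i k))"
    using nth_gates_sel[OF e(1)] e by (simp add: sel_gate_def)
  hence "wires ! (sel_wire n D T t i k)
           = eval_gate wires (SelG (3*n + idx) (chain_wire n D T t i k) (payload_wire n D T t (N i k)))"
    using wires_gate[of "n_flags n D T + n + idx"] e sel_wire_eq by (simp add: idx_def)
  thus ?thesis using wires_flag[OF t i k] by (simp add: idx_def)
qed

lemma wires_sel:
  assumes t: "t < T" and i: "i < n"
    and payload: "\<forall>v<n. wires ! (payload_wire n D T t v) = VW (Pt t v)"
  shows "k < D \<Longrightarrow> wires ! (sel_wire n D T t i k) =
           VW (if matched N D (Lt t) i \<and> match_slot N D (Lt t) i \<le> k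
               then Pt t (N i (match_slot N D (Lt t) i)) else Pt t i)"
proof (induction k)
  case 0 thus ?case using wires_sel_gate[OF t i 0] payload i rng by (auto simp: chain_wire_def)
next
  case (Suc k)
  thus ?case using wires_sel_gate[OF t i Suc.prems] payload i rng by (auto simp: chain_wire_def le_Suc_eq)
qed

lemma wires_payload: "t \<le> T \<Longrightarrow> v < n \<Longrightarrow> wires ! (payload_wire n D T t v) = VW (Pt t v)"
proof (induction t arbitrary: v)
  case 0
  have "wires ! (3*v + 2) = VW (snd (I!v))" using wires_input[OF 0(2), of 2] by (simp add: encode_elem_def)
  thus ?case by (simp add: payload_wire_def)
next
  case (Suc t)
  have t: "t < T" using Suc by simp
  have A: "\<forall>v<n. wires ! (payload_wire n D T t v) = VW (Pt t v)" using Suc by simp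
  have D0: "D - 1 < D" using D1 by simp
  have "wires ! (payload_wire n D T (Suc t) v) = wires ! (sel_wire n D T t v (D-1))" by (simp add: payload_wire_def)
  also have "\<dots> = VW (if matched N D (Lt t) v \<and> match_slot N D (Lt t) v \<le> D - 1
                        then Pt t (N v (match_slot N D (Lt t) v)) else Pt t v)"
    using wires_sel[OF t Suc(3) A D0] .
  also have "\<dots> = VW (Pt (Suc t) v)"
    using match_slot_less[of N D "Lt t" v] by (auto simp: round_payload_def partner_def)
  finally show ?case .
qed

lemma run_swapper_circuit: "run_circuit (swapper_circuit n D T N) I = state_array (rounds_label N D T lab0) (rounds_payload N D T lab0 pay0) n"
proof (rule nth_equalityI)
  show "length (run_circuit (swapper_circuit n D T N) I) = length (state_array (rounds_label N D T lab0) (rounds_payload N D T lab0 pay0) n)"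
    by (simp add: run_circuit_def swapper_circuit_def state_array_def Let_def)
  fix i assume "i < length (run_circuit (swapper_circuit n D T N) I)"
  hence i: "i < n" by (simp add: run_circuit_def swapper_circuit_def Let_def)
  have c: "wires ! (3*n + n_flags n D T + i) = VB (rounds_label N D T lab0 i \<noteq> Bot)" by (rule wires_colored[OF i])
  have r: "wires ! (3*i + 1) = VB (fst (I!i) = Red)" using wires_input[OF i, of 1] by (simp add: encode_elem_def)
  have p: "wires ! (payload_wire n D T T i) = VW (rounds_payload N D T lab0 pay0 i)" using wires_payload[OF _ i] by simp
  have lab: "decode_label (rounds_label N D T lab0 i \<noteq> Bot) (fst (I!i) = Red) = rounds_label N D T lab0 i"
    using rounds_label_cases[of N D T lab0 i] i by (cases "fst (I!i)") (auto simp: decode_label_def)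
  show "run_circuit (swapper_circuit n D T N) I ! i = state_array (rounds_label N D T lab0) (rounds_payload N D T lab0 pay0) n ! i"
    using i c r p lab by (simp add: run_circuit_def swapper_circuit_def state_array_def Let_def)
qed


end

abbreviation "C \<equiv> swapper_circuit n D T N"

lemma num_bool_gates_swapper: "num_bool_gates C = (T*D + 1) * n"
proof -
  have "filter is_bool_gate (gates C) = map (flag_gate n D T N) [0..<n_flags n D T] @ map (colored_gate D T N) [0..<n]"
    by (simp add: swapper_circuit_def flag_gate_def colored_gate_def sel_gate_def filter_map comp_def)
  thus ?thesis by (simp add: num_bool_gates_def n_flags_def algebra_simps)
qed

lemma num_sel_gates_swapper: "num_sel_gates C = T*D * n"
proof -
  have "filter (\<lambda>g. \<not> is_bool_gate g) (gates C) = map (sel_gate n D T N) [0..<n_flags n D T]"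
    by (simp add: swapper_circuit_def flag_gate_def colored_gate_def sel_gate_def filter_map comp_def)
  thus ?thesis by (simp add: num_sel_gates_def n_flags_def algebra_simps)
qed

lemma length_view_wires: "length (view_wires D T N i) = 2 * ball_size D (3*T)"
  unfolding view_wires_def by (subst length_concat_const[where c=2]) (auto simp: view_def length_ball)

lemma max_fan_in_swapper: "max_fan_in C \<le> 2 * ball_size D (3*T) + 3"
  unfolding max_fan_in_def
  by (rule Max_insert_0_le) (auto simp: swapper_circuit_def flag_gate_def colored_gate_def sel_gate_def length_view_wires)

lemma payload_wire_outside: "t \<le> T \<Longrightarrow> v < n \<Longrightarrow> payload_wire n D T t v < 3*n \<or> payload_wire n D T t v \<ge> sel_base n D T"
  by (auto simp: payload_wire_def sel_wire_def)

lemma chain_wire_outside: "t < T \<Longrightarrow> i < n \<Longrightarrow> chain_wire n D T t i k < 3*n \<or> chain_wire n D T t i k \<ge> sel_base n D T"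
  using payload_wire_outside[of t i] by (auto simp: chain_wire_def sel_wire_def)

lemma bool_wire_notin_view_wires: "i < n \<Longrightarrow> 3*n \<le> v \<Longrightarrow> v \<notin> set (view_wires D T N i)"
  using view_wires_props(1) by fastforce

lemma count_sel_gate_ins:
  assumes idx: "idx < n_flags n D T" and v: "3*n \<le> v" "v < sel_base n D T"
  shows "length (filter (\<lambda>u. u = v) (gate_ins (sel_gate n D T N idx))) = (if 3*n + idx = v then 1 else 0)"
proof -
  note d = idx_decode[OF idx]
  have "N (idx_vertex n D idx) (idx_slot D idx) < n" using rng d by simp
  hence "payload_wire n D T (idx_round n D idx) (N (idx_vertex n D idx) (idx_slot D idx)) \<noteq> v"
    using payload_wire_outside[of "idx_round n D idx"] d v by fastforce
  moreover have "chain_wire n D T (idx_round n D idx) (idx_vertex n D idx) (idx_slot D idx) \<noteq> v"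
    using chain_wire_outside[of "idx_round n D idx" "idx_vertex n D idx" "idx_slot D idx"] d v by auto
  ultimately show ?thesis by (simp add: sel_gate_def)
qed

lemma count_gate_ins_bool_wire:
  assumes v: "3*n \<le> v" "v < sel_base n D T"
  shows "length (filter (\<lambda>u. u = v) (concat (map gate_ins (gates C)))) \<le> 1"
proof -
  have flags: "length (filter (\<lambda>u. u = v) (gate_ins (flag_gate n D T N idx))) = 0" if "idx < n_flags n D T" for idx
    using bool_wire_notin_view_wires[OF _ v(1)] idx_decode(3)[OF that]
    by (fastforce simp: flag_gate_def filter_empty_conv)
  have colored: "length (filter (\<lambda>u. u = v) (gate_ins (colored_gate D T N i))) = 0" if "i < n" for i
    using bool_wire_notin_view_wires[OF that v(1)] by (auto simp: colored_gate_def filter_empty_conv)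
  have "length (filter (\<lambda>u. u = v) (concat (map gate_ins (gates C)))) =
      (\<Sum>idx\<leftarrow>[0..<n_flags n D T]. length (filter (\<lambda>u. u = v) (gate_ins (flag_gate n D T N idx)))) +
      (\<Sum>i\<leftarrow>[0..<n]. length (filter (\<lambda>u. u = v) (gate_ins (colored_gate D T N i)))) +
      (\<Sum>idx\<leftarrow>[0..<n_flags n D T]. length (filter (\<lambda>u. u = v) (gate_ins (sel_gate n D T N idx))))"
    by (simp add: swapper_circuit_def length_filter_concat comp_def)
  also have "\<dots> = (\<Sum>idx\<leftarrow>[0..<n_flags n D T]. (if 3*n + idx = v then 1 else 0::nat))"
  proof -
    have "(\<Sum>idx\<leftarrow>[0..<n_flags n D T]. length (filter (\<lambda>u. u = v) (gate_ins (flag_gate n D T N idx)))) = 0"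
      using flags by (simp add: sum_list_eq_0_iff)
    moreover have "(\<Sum>i\<leftarrow>[0..<n]. length (filter (\<lambda>u. u = v) (gate_ins (colored_gate D T N i)))) = 0"
      using colored by (simp add: sum_list_eq_0_iff)
    moreover have "(\<Sum>idx\<leftarrow>[0..<n_flags n D T]. length (filter (\<lambda>u. u = v) (gate_ins (sel_gate n D T N idx)))) =
        (\<Sum>idx\<leftarrow>[0..<n_flags n D T]. (if 3*n + idx = v then 1 else 0::nat))"
      using count_sel_gate_ins[OF _ v] by (intro arg_cong[where f=sum_list] map_cong) auto
    ultimately show ?thesis by simp
  qed
  also have "\<dots> \<le> 1" by (rule sum_list_indicator_le_1)
  finally show ?thesis .
qed

lemma count_outs_bool_wire:
  assumes v: "3*n \<le> v" "v < sel_base n D T"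
  shows "length (filter (\<lambda>u. u = v) (concat (map (\<lambda>(a,b,p). [a,b,p]) (outs C)))) \<le> 1"
proof -
  have "length (filter (\<lambda>u. u = v) (concat (map (\<lambda>(a,b,p). [a,b,p]) (outs C)))) =
      (\<Sum>i\<leftarrow>[0..<n]. length (filter (\<lambda>u. u = v) [3*n + n_flags n D T + i, 3*i+1, payload_wire n D T T i]))"
    by (simp add: swapper_circuit_def length_filter_concat comp_def)
  also have "\<dots> = (\<Sum>i\<leftarrow>[0..<n]. (if (3*n + n_flags n D T) + i = v then 1 else 0::nat))"
  proof (intro arg_cong[where f=sum_list] map_cong refl)
    fix i assume "i \<in> set [0..<n]"
    hence i: "i < n" by simp
    have "payload_wire n D T T i \<noteq> v" using payload_wire_outside[of T i] i v by auto
    moreover have "3*i+1 \<noteq> v" using i v by auto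
    ultimately show "length (filter (\<lambda>u. u = v) [3*n + n_flags n D T + i, 3*i+1, payload_wire n D T T i]) =
       (if (3*n + n_flags n D T) + i = v then 1 else 0::nat)" by auto
  qed
  also have "\<dots> \<le> 1" by (rule sum_list_indicator_le_1)
  finally show ?thesis .
qed

lemma fan_out_bool_wire: "3*n \<le> v \<Longrightarrow> v < sel_base n D T \<Longrightarrow> fan_out C v \<le> 2"
  using count_gate_ins_bool_wire count_outs_bool_wire unfolding fan_out_def by fastforce

lemma max_bool_fan_out_swapper: "max_bool_fan_out n C \<le> 2"
  unfolding max_bool_fan_out_def
proof (rule Max_insert_0_le)
  show "finite {fan_out C (3*n + k) |k. k < length (gates C) \<and> is_bool_gate (gates C ! k)}" by simp
  show "\<forall>x\<in>{fan_out C (3*n + k) |k. k < length (gates C) \<and> is_bool_gate (gates C ! k)}. x \<le> 2"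
  proof clarify
    fix k assume k: "k < length (gates C)" "is_bool_gate (gates C ! k)"
    have "k < n_flags n D T + n"
    proof (rule ccontr)
      assume "\<not> ?thesis"
      then obtain idx where "k = n_flags n D T + n + idx" by (metis le_Suc_ex not_less)
      moreover have "idx < n_flags n D T" using k(1) calculation length_gates by simp
      ultimately show False using k(2) nth_gates_sel by (simp add: sel_gate_def)
    qed
    thus "fan_out C (3*n + k) \<le> 2" by (intro fan_out_bool_wire) (auto simp: sel_base_def)
  qed
qed


abbreviation "ds \<equiv> wire_depths n (swapper_circuit n D T N)"

lemma length_depths: "length ds = 3*n + 2 * n_flags n D T + n"
  unfolding wire_depths_def by (simp add: length_fold_snoc length_gates)

lemma depth_input: "x < 3*n \<Longrightarrow> ds ! x = 0"
proof -
  assume x: "x < 3*n"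
  have "take (3*n) ds = replicate (3*n) 0" unfolding wire_depths_def by (subst take_fold_snoc) auto
  thus ?thesis using x by (metis nth_replicate nth_take)
qed

lemma depth_gate:
  assumes j: "j < 2 * n_flags n D T + n"
  shows "ds ! (3*n + j) = 1 + Max (insert 0 (set (map (\<lambda>i. ds ! i) (gate_ins (gates (swapper_circuit n D T N) ! j)))))"
proof -
  have "gate_typed (take (3*n + j) (wire_kinds n (swapper_circuit n D T N))) (gates (swapper_circuit n D T N) ! j)"
    using wf_swapper_circuit j length_gates unfolding wf_circuit_def by auto
  hence ins: "\<forall>x\<in>set (gate_ins (gates (swapper_circuit n D T N) ! j)). x < 3*n + j" by (rule gate_typed_take)
  have "ds ! (length (replicate (3*n) (0::nat)) + j) =
    1 + Max (insert 0 (set (map (\<lambda>i. take (length (replicate (3*n) (0::nat)) + j) ds ! i) (gate_ins (gates (swapper_circuit n D T N) ! j)))))"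
    unfolding wire_depths_def by (rule nth_fold_snoc) (use j length_gates in simp)
  moreover have "map (\<lambda>i. take (3*n + j) ds ! i) (gate_ins (gates (swapper_circuit n D T N) ! j)) =
                 map (\<lambda>i. ds ! i) (gate_ins (gates (swapper_circuit n D T N) ! j))"
    using ins by (intro map_cong) auto
  ultimately show ?thesis by simp
qed

lemma depth_bool_gate: "j < n_flags n D T + n \<Longrightarrow> ds ! (3*n + j) \<le> 1"
proof -
  assume j: "j < n_flags n D T + n"
  have "\<forall>x\<in>set (gate_ins (gates (swapper_circuit n D T N) ! j)). x < 3*n"
  proof (cases "j < n_flags n D T")
    case True
    have "idx_vertex n D j < n" using idx_decode[OF True] by simp
    thus ?thesis using nth_gates_flag[OF True] view_wires_props(1) by (auto simp: flag_gate_def)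
  next
    case False
    then obtain i where i: "j = n_flags n D T + i" "i < n" using j by (metis add_less_cancel_left le_Suc_ex not_less)
    thus ?thesis using nth_gates_colored[OF i(2)] view_wires_props(1)[OF i(2)] by (auto simp: colored_gate_def)
  qed
  hence "Max (insert 0 (set (map (\<lambda>i. ds ! i) (gate_ins (gates (swapper_circuit n D T N) ! j))))) \<le> 0"
    by (intro Max_insert_0_le) (auto simp: depth_input)
  thus ?thesis using depth_gate[of j] j by simp
qed

lemma depth_sel_gate:
  assumes t: "t < T" and i: "i < n" and k: "k < D"
  shows "ds ! (sel_wire n D T t i k)
           \<le> 1 + max 1 (max (ds ! (chain_wire n D T t i k)) (ds ! (payload_wire n D T t (N i k))))"
proof -
  define idx where "idx = (t*n+i)*D+k"
  note e = idx_encode[OF t i k, folded idx_def]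
  have "ds ! (sel_wire n D T t i k) = ds ! (3*n + (n_flags n D T + n + idx))"
    using sel_wire_eq by (simp add: idx_def)
  also have "\<dots> = 1 + Max (insert 0 (set (map (\<lambda>i. ds ! i) (gate_ins (sel_gate n D T N idx)))))"
    using depth_gate[of "n_flags n D T + n + idx"] nth_gates_sel[of idx] e by simp
  also have "\<dots> \<le> 1 + max 1 (max (ds ! (chain_wire n D T t i k)) (ds ! (payload_wire n D T t (N i k))))"
    using depth_bool_gate[of idx] e by (simp add: sel_gate_def idx_def Max_le_iff)
  finally show ?thesis .
qed

lemma depth_sel_wire:
  assumes t: "t < T" and i: "i < n"
    and payload: "\<And>v. v < n \<Longrightarrow> ds ! (payload_wire n D T t v) \<le> t*(D+1)"
  shows "k < D \<Longrightarrow> ds ! (sel_wire n D T t i k) \<le> 2 + t*(D+1) + k"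
proof (induction k)
  case 0
  have "N i 0 < n" using rng i 0 by simp
  thus ?case using depth_sel_gate[OF t i 0] payload[OF i] payload[of "N i 0"] by (simp add: chain_wire_def)
next
  case (Suc k)
  have "N i (Suc k) < n" using rng i Suc.prems by simp
  thus ?case using depth_sel_gate[OF t i Suc.prems] payload[of "N i (Suc k)"] Suc by (simp add: chain_wire_def)
qed

lemma depth_payload_wire: "t \<le> T \<Longrightarrow> v < n \<Longrightarrow> ds ! (payload_wire n D T t v) \<le> t*(D+1)"
proof (induction t arbitrary: v)
  case 0 thus ?case by (simp add: payload_wire_def depth_input)
next
  case (Suc t)
  have "ds ! (payload_wire n D T (Suc t) v) = ds ! (sel_wire n D T t v (D-1))" by (simp add: payload_wire_def)
  also have "\<dots> \<le> 2 + t*(D+1) + (D-1)" using depth_sel_wire[of t v "D-1"] Suc D1 by simp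
  finally show ?case using D1 by simp
qed

lemma depth_swapper: "depth n (swapper_circuit n D T N) \<le> 2 + T*(D+1)"
  unfolding depth_def
proof (rule Max_insert_0_le)
  show "finite (set ds)" by simp
  show "\<forall>x\<in>set ds. x \<le> 2 + T*(D+1)"
  proof
    fix x assume "x \<in> set ds"
    then obtain w where w: "w < length ds" "x = ds ! w" by (metis in_set_conv_nth)
    consider "w < 3*n" | "3*n \<le> w" "w < 3*n + n_flags n D T + n" | "3*n + n_flags n D T + n \<le> w"
      by linarith
    thus "x \<le> 2 + T*(D+1)"
    proof cases
      case 1 thus ?thesis using w depth_input by simp
    next
      case 2
      hence "ds ! w \<le> 1" using depth_bool_gate[of "w - 3*n"] by simp
      thus ?thesis using w by simp
    next
      case 3
      define idx where "idx = w - (3*n + n_flags n D T + n)"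
      have "idx < n_flags n D T" using w(1) length_depths 3 unfolding idx_def by arith
      note d = idx_decode[OF this]
      have "w = sel_wire n D T (idx_round n D idx) (idx_vertex n D idx) (idx_slot D idx)"
        using 3 d(1) by (simp add: sel_wire_def sel_base_def idx_def)
      hence "x \<le> 2 + idx_round n D idx*(D+1) + idx_slot D idx"
        using depth_sel_wire[OF d(2,3) depth_payload_wire] d w by auto
      also have "\<dots> \<le> 2 + (T-1)*(D+1) + D" using d by (intro add_mono mult_right_mono) auto
      also have "\<dots> \<le> 2 + T*(D+1)" using T1 by (cases T) auto
      finally show ?thesis .
    qed
  qed
qed

end

lemma is_approx_swapper_swapper_circuit:
  assumes g: "sym_expander n D N" and D1: "1 \<le> D"
  shows "is_approx_swapper n w (swapper_circuit n D (9*D) N)"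
  unfolding is_approx_swapper_def
proof (intro conjI allI impI)
  have T1: "1 \<le> 9*D" using D1 by simp
  have rng: "\<forall>i<n. \<forall>k<D. N i k < n" using g by (simp add: sym_expander_def)
  show "wf_circuit n (swapper_circuit n D (9*D) N)" by (rule wf_swapper_circuit[OF D1 T1 rng])
  fix I :: "elem list" assume "length I = n \<and> (\<forall>e\<in>set I. length (snd e) = w)"
  hence lI: "length I = n" by simp
  show "approx_swap_ok I (run_circuit (swapper_circuit n D (9*D) N) I)"
    using run_swapper_circuit[OF D1 T1 rng lI] rounds_approx_swap_ok[OF g D1 lI] by simp
qed

theorem mainTheorem12:
  shows "\<exists>c::nat. \<forall>n w. \<exists>C. is_approx_swapper n w C \<and>
           max_fan_in C \<le> c \<and> max_bool_fan_out n C \<le> c \<and>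
           num_bool_gates C \<le> c * n \<and> num_sel_gates C \<le> c * n \<and> depth n C \<le> c"
proof -
  define D where "D = expander_degree"
  define T where "T = 9 * D"
  define c where "c = 2 * ball_size D (3*T) + 3 + (T*D + 1) + (2 + T*(D+1))"
  have D1: "1 \<le> D" and T1: "1 \<le> T" by (simp_all add: D_def T_def expander_degree_def base_degree_def)
  have bounds: "2 * ball_size D (3*T) + 3 \<le> c" "2 \<le> c" "2 + T*(D+1) \<le> c" by (simp_all add: c_def)
  have gates: "(T*D + 1) * n \<le> c * n" "T*D * n \<le> c * n" for n
    by (intro mult_right_mono; simp add: c_def)+
  show ?thesis
  proof (intro exI[of _ c] allI)
    fix n w :: nat
    obtain N where g: "sym_expander n D N" using sym_expander_exists unfolding D_def by blast
    hence rng: "\<forall>i<n. \<forall>k<D. N i k < n" by (simp add: sym_expander_def)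
    show "\<exists>C. is_approx_swapper n w C \<and> max_fan_in C \<le> c \<and> max_bool_fan_out n C \<le> c \<and>
           num_bool_gates C \<le> c * n \<and> num_sel_gates C \<le> c * n \<and> depth n C \<le> c"
      using is_approx_swapper_swapper_circuit[OF g D1, of w, folded T_def] bounds gates[of n]
        max_fan_in_swapper[OF D1 T1 rng] max_bool_fan_out_swapper[OF D1 T1 rng]
        num_bool_gates_swapper[OF D1 T1 rng] num_sel_gates_swapper[OF D1 T1 rng] depth_swapper[OF D1 T1 rng]
      by (intro exI[of _ "swapper_circuit n D T N"] conjI) (assumption | linarith)+
  qed
qed

end
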